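(* Fix $\alpha\in(0,1/2)$, $\varepsilon\in(0,1)$, $0<r<r'<r/(1-\varepsilon)$, and let $s\in(r',r/(1-\varepsilon))$. Let $(r_n)$ be any sequence with $r_n=o(n^{-r'/(2r'+1/2)})$. Then there does not exist a confidence set $C_n=C_n(Y)\subseteq\ell^2$ such that for every $0<b<B$ and every $J_0\in\mathbb N$ both $$\liminf_{n\to\infty}\ \inf_{f\in S^r_\varepsilon(b,B,J_0)\cup S^s_\varepsilon(b,B,J_0)}\Pr_f(f\in C_n)\ge1-\alpha$$ and $$\sup_{f\in S^s_\varepsilon(b,B,J_0)}\Pr_f(|C_n|>r_n)\to0\quad(n\to\infty)$$ hold, where $|C_n|$ is the $\ell^2$-diameter of $C_n$.
   Context: Gaussian sequence model: observations $Y=(y_k)_{k\in\mathbb N}$, $y_k=f_k+n^{-1/2}g_k$, $g_k$ i.i.d. $N(0,1)$, $f\in\ell^2$; $\Pr_f$ is the law of $Y$. Sobolev norm $\|f\|_{t,2}^2=\sum_k f_k^2k^{2t}$. Convention: $\sum_{k=a}^b$ for real $a,b$ means $\sum_{k=\lceil a\rceil}^{\lfloor b\rfloor}$. For $t>0$, $\varepsilon\in(0,1)$, $J_0\in\mathbb N$, $0<b<B$, and $c(t)=16\times2^{2t+1}$, $$S^t_\varepsilon(b,B,J_0)=\Big\{f\in\ell^2:\|f\|_{t,2}\in[b,B],\ \sum_{k=2^{J(1-\varepsilon)}}^{2^J}f_k^2\ge c(t)\|f\|_{t,2}^2 2^{-2Jt}\ \forall J\in\mathbb N, J\ge J_0\Big\}.$$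 *)

theory Defs
  imports "HOL-Probability.Probability" "HOL-Library.Landau_Symbols"
begin

text \<open>Sequences are indexed by k = 1, 2, ...; coordinate 0 is unused and forced to 0.\<close>

definition l2_seq :: "(nat \<Rightarrow> real) set" where
  "l2_seq = {f. f 0 = 0 \<and> summable (\<lambda>k. (f k)\<^sup>2)}"

definition l2_dist :: "(nat \<Rightarrow> real) \<Rightarrow> (nat \<Rightarrow> real) \<Rightarrow> real" where
  "l2_dist f g = sqrt (\<Sum>k. (f k - g k)\<^sup>2)"

definition l2_diam :: "(nat \<Rightarrow> real) set \<Rightarrow> ereal" where
  "l2_diam C = (SUP f\<in>C. SUP g\<in>C. ereal (l2_dist f g))"

definition sob_norm :: "real \<Rightarrow> (nat \<Rightarrow> real) \<Rightarrow> real" where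
  "sob_norm t f = sqrt (\<Sum>k. (f k)\<^sup>2 * (real k) powr (2 * t))"

definition c_const :: "real \<Rightarrow> real" where
  "c_const t = 16 * 2 powr (2 * t + 1)"

definition S_set :: "real \<Rightarrow> real \<Rightarrow> real \<Rightarrow> real \<Rightarrow> nat \<Rightarrow> (nat \<Rightarrow> real) set" where
  "S_set t \<epsilon> b B J0 = {f \<in> l2_seq.
      summable (\<lambda>k. (f k)\<^sup>2 * (real k) powr (2 * t)) \<and>
      b \<le> sob_norm t f \<and> sob_norm t f \<le> B \<and>
      (\<forall>J::nat. J0 \<le> J \<longrightarrow>
         (\<Sum>k\<in>{nat \<lceil>2 powr (real J * (1 - \<epsilon>))\<rceil> .. 2 ^ J}. (f k)\<^sup>2)
           \<ge> c_const t * (sob_norm t f)\<^sup>2 * 2 powr (- 2 * real J * t))}"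

text \<open>Law of Y = (y_k), y_k = f_k + n^{-1/2} g_k, g_k iid N(0,1).\<close>
definition Pr_obs :: "(nat \<Rightarrow> real) \<Rightarrow> nat \<Rightarrow> (nat \<Rightarrow> real) measure" where
  "Pr_obs f n = (\<Pi>\<^sub>M k\<in>UNIV. density lborel (normal_density (f k) (1 / sqrt (real n))))"

definition obs_events :: "(nat \<Rightarrow> real) set set" where
  "obs_events = sets (\<Pi>\<^sub>M k\<in>(UNIV::nat set). (borel :: real measure))"

end

theory Submission
  imports Defs
begin

text \<open>
  Let \<open>f0\<close> be \<open>2^(-i u)\<close> at the coordinates \<open>2^i\<close>, \<open>i \<ge> 1\<close>, and \<open>0\<close> elsewhere, where
  \<open>s < u < r / (1 - \<epsilon>)\<close>. Its Sobolev-\<open>t\<close> norm is finite for \<open>t < u\<close>, and its energy in the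
  block \<open>[2^(J(1-\<epsilon>)), 2^J]\<close> is at least \<open>2^(-2u(J(1-\<epsilon>)+1))\<close>, which eventually beats
  \<open>c(t) B\<^sup>2 2^(-2Jt)\<close> for \<open>t \<ge> r > u(1-\<epsilon>)\<close>. So \<open>f0 \<in> S^s\<close>, and every \<open>f\<theta>\<close> obtained from
  \<open>f0\<close> by putting \<open>\<plusminus>\<gamma>\<close> on the \<open>2^j - 1\<close> empty coordinates of the dyadic level
  \<open>(2^j, 2^(j+1))\<close>, with \<open>\<gamma>\<^sup>2 = 2^(-j) 2^(-2r(j+1))\<close>, lies in \<open>S^r\<close>.

  For \<open>2^j \<approx> n^(\<rho>/r)\<close>, \<open>\<rho> = r'/(2r'+1/2)\<close>, every \<open>f\<theta>\<close> is at l2-distance \<open>\<approx> n^(-\<rho>) \<ggreater> r_n\<close>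
  from \<open>f0\<close>, while the uniform mixture of the laws of the \<open>f\<theta>\<close> has chi-square divergence
  \<open>cosh(n\<gamma>\<^sup>2)^(2^j - 1) - 1 \<approx> n\<^sup>2 2^(-j(1+4r)) \<rightarrow> 0\<close> from the law of \<open>f0\<close>; this is where
  \<open>r < r'\<close> enters. A confidence set covering \<open>f0\<close> and all \<open>f\<theta>\<close> with probability about
  \<open>1 - \<alpha>\<close> and of diameter below \<open>r_n\<close> at \<open>f0\<close> would give a test of \<open>f0\<close> against the
  mixture with total error about \<open>2\<alpha> < 1\<close>, which the chi-square bound rules out.
\<close>

section \<open>Densities of product measures\<close>

lemma (in product_prob_space) nn_integral_PiM_prod_finite:
  assumes L: "finite L" "L \<subseteq> I" and h: "\<And>i. i\<in>L \<Longrightarrow> h i \<in> borel_measurable (M i)"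
  shows "(\<integral>\<^sup>+ Y. (\<Prod>i\<in>L. h i (Y i)) \<partial>PiM I M) = (\<Prod>i\<in>L. \<integral>\<^sup>+ y. h i y \<partial>M i)"
proof -
  have "(\<integral>\<^sup>+ Y. (\<Prod>i\<in>L. h i (Y i)) \<partial>PiM I M) = (\<integral>\<^sup>+ Y. (\<Prod>i\<in>L. h i (restrict Y L i)) \<partial>PiM I M)"
    by (intro nn_integral_cong prod.cong) auto
  also have "\<dots> = (\<integral>\<^sup>+ x. (\<Prod>i\<in>L. h i (x i)) \<partial>distr (PiM I M) (PiM L M) (\<lambda>x. restrict x L))"
    using L h by (subst nn_integral_distr) (auto intro!: measurable_restrict_subset borel_measurable_prod_ennreal)
  also have "\<dots> = (\<integral>\<^sup>+ x. (\<Prod>i\<in>L. h i (x i)) \<partial>PiM L M)"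
    using distr_PiM_restrict_finite[OF L] by simp
  also have "\<dots> = (\<Prod>i\<in>L. \<integral>\<^sup>+ y. h i y \<partial>M i)"
    using L h by (intro product_nn_integral_prod) auto
  finally show ?thesis .
qed

lemma (in product_prob_space) emeasure_density_PiM_prod_emb:
  assumes K: "finite K" "K \<subseteq> I"
    and lm: "\<And>i. i \<in> K \<Longrightarrow> l i \<in> borel_measurable (M i)"
    and l1: "\<And>i. i \<in> K \<Longrightarrow> (\<integral>\<^sup>+ y. l i y \<partial>M i) = 1"
    and J: "finite J" "J \<subseteq> I" and F: "\<And>j. j \<in> J \<Longrightarrow> F j \<in> sets (M j)"
  shows "emeasure (density (PiM I M) (\<lambda>Y. \<Prod>i\<in>K. l i (Y i))) (prod_emb I M J (Pi\<^sub>E J F))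
       = (\<Prod>j\<in>J. emeasure (if j \<in> K then density (M j) (l j) else M j) (F j))"
proof -
  define h where "h i y = (if i \<in> J then indicator (F i) y else 1) * (if i \<in> K then l i y else (1::ennreal))"
    for i y
  have h_meas: "h i \<in> borel_measurable (M i)" if "i \<in> J \<union> K" for i
    using that F lm unfolding h_def
    by (cases "i \<in> J"; cases "i \<in> K") (auto intro!: borel_measurable_times_ennreal borel_measurable_indicator)
  have "prod_emb I M J (Pi\<^sub>E J F) \<in> sets (PiM I M)"
    using J F by (intro measurable_prod_emb sets_PiM_I_finite) auto
  then have "emeasure (density (PiM I M) (\<lambda>Y. \<Prod>i\<in>K. l i (Y i))) (prod_emb I M J (Pi\<^sub>E J F))
      = (\<integral>\<^sup>+ Y. (\<Prod>i\<in>K. l i (Y i)) * indicator (prod_emb I M J (Pi\<^sub>E J F)) Y \<partial>PiM I M)"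
    using K lm
    by (subst emeasure_density)
       (auto intro!: borel_measurable_prod_ennreal measurable_compose[OF measurable_component_singleton])
  also have "\<dots> = (\<integral>\<^sup>+ Y. (\<Prod>i\<in>J \<union> K. h i (Y i)) \<partial>PiM I M)"
  proof (intro nn_integral_cong)
    fix Y assume Y: "Y \<in> space (PiM I M)"
    have ind: "indicator (prod_emb I M J (Pi\<^sub>E J F)) Y = (\<Prod>i\<in>J. indicator (F i) (Y i) :: ennreal)"
      using Y J by (auto simp: prod_emb_def indicator_def space_PiM PiE_iff)
    have "(\<Prod>i\<in>J \<union> K. h i (Y i))
        = (\<Prod>i\<in>J \<union> K. if i \<in> J then indicator (F i) (Y i) else 1) * (\<Prod>i\<in>J \<union> K. if i \<in> K then l i (Y i) else 1)"
      unfolding h_def by (simp add: prod.distrib)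
    also have "\<dots> = (\<Prod>i\<in>J. indicator (F i) (Y i)) * (\<Prod>i\<in>K. l i (Y i))"
      using J K by (simp add: prod.If_cases Int_absorb1 Int_absorb2)
    finally show "(\<Prod>i\<in>K. l i (Y i)) * indicator (prod_emb I M J (Pi\<^sub>E J F)) Y = (\<Prod>i\<in>J \<union> K. h i (Y i))"
      by (simp add: ind mult.commute)
  qed
  also have "\<dots> = (\<Prod>i\<in>J \<union> K. \<integral>\<^sup>+ y. h i y \<partial>M i)"
    using J K h_meas by (intro nn_integral_PiM_prod_finite) auto
  also have "\<dots> = (\<Prod>i\<in>J \<union> K. if i \<in> J then emeasure (if i \<in> K then density (M i) (l i) else M i) (F i) else 1)"
  proof (intro prod.cong refl)
    fix i assume i: "i \<in> J \<union> K"
    show "(\<integral>\<^sup>+ y. h i y \<partial>M i) = (if i \<in> J then emeasure (if i \<in> K then density (M i) (l i) else M i) (F i) else 1)"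
    proof (cases "i \<in> J")
      case True
      then show ?thesis
        using F[OF True] lm by (cases "i \<in> K") (auto simp: h_def emeasure_density mult.commute)
    next
      case False
      then show ?thesis
        using i l1 by (simp add: h_def)
    qed
  qed
  also have "\<dots> = (\<Prod>j\<in>J. emeasure (if j \<in> K then density (M j) (l j) else M j) (F j))"
    using J K by (simp add: prod.If_cases Int_absorb2)
  finally show ?thesis .
qed

lemma (in product_prob_space) PiM_density_eq_density_PiM:
  assumes K: "finite K" "K \<subseteq> I"
    and lm: "\<And>i. i \<in> K \<Longrightarrow> l i \<in> borel_measurable (M i)"
    and l1: "\<And>i. i \<in> K \<Longrightarrow> (\<integral>\<^sup>+ y. l i y \<partial>M i) = 1"
  shows "PiM I (\<lambda>i. if i \<in> K then density (M i) (l i) else M i)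
       = density (PiM I M) (\<lambda>Y. \<Prod>i\<in>K. l i (Y i))"
proof -
  let ?M1 = "\<lambda>i. if i \<in> K then density (M i) (l i) else M i"
  have "prob_space (?M1 i)" for i
  proof (cases "i \<in> K")
    case True
    then show ?thesis
      using l1[OF True] lm[OF True] by (auto intro!: prob_spaceI simp: emeasure_density)
  qed (simp add: prob_space)
  then interpret M1: product_prob_space ?M1 I
    by (simp add: product_prob_space_def product_sigma_finite_def prob_space_imp_sigma_finite
        product_prob_space_axioms_def)
  show ?thesis
  proof (rule M1.PiM_eq[symmetric])
    show "sets (density (PiM I M) (\<lambda>Y. \<Prod>i\<in>K. l i (Y i))) = sets (PiM I ?M1)"
      by (simp, intro sets_PiM_cong) auto
  next
    fix J F assume J: "finite J" "J \<subseteq> I" and F: "\<And>j. j \<in> J \<Longrightarrow> F j \<in> sets (?M1 j)"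
    have space_eq: "space (?M1 i) = space (M i)" for i
      by simp
    have "F j \<in> sets (M j)" if "j \<in> J" for j
      using F[OF that] by (cases "j \<in> K") simp_all
    moreover have "prod_emb I ?M1 J (Pi\<^sub>E J F) = prod_emb I M J (Pi\<^sub>E J F)"
      by (simp add: prod_emb_def space_eq)
    ultimately show "emeasure (density (PiM I M) (\<lambda>Y. \<Prod>i\<in>K. l i (Y i))) (prod_emb I ?M1 J (Pi\<^sub>E J F))
        = (\<Prod>j\<in>J. emeasure (?M1 j) (F j))"
      using emeasure_density_PiM_prod_emb[OF K lm l1 J] by simp
  qed
qed

section \<open>Gaussian likelihood ratios\<close>

definition gauss_lr :: "real \<Rightarrow> real \<Rightarrow> real \<Rightarrow> real" where
  "gauss_lr \<sigma> a y = exp (a * y / \<sigma>\<^sup>2 - a\<^sup>2 / (2 * \<sigma>\<^sup>2))"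

lemma gauss_lr_pos: "0 < gauss_lr \<sigma> a y"
  by (simp add: gauss_lr_def)

lemma gauss_lr_measurable [measurable]: "gauss_lr \<sigma> a \<in> borel_measurable borel"
  unfolding gauss_lr_def by measurable

lemma normal_density_mult_gauss_lr:
  assumes "0 < \<sigma>"
  shows "normal_density 0 \<sigma> y * gauss_lr \<sigma> a y = normal_density a \<sigma> y"
proof -
  have "- (y - 0)\<^sup>2 / (2 * \<sigma>\<^sup>2) + (a * y / \<sigma>\<^sup>2 - a\<^sup>2 / (2 * \<sigma>\<^sup>2)) = - (y - a)\<^sup>2 / (2 * \<sigma>\<^sup>2)"
    using assms by (simp add: field_simps power2_eq_square)
  then show ?thesis
    unfolding normal_density_def gauss_lr_def by (simp add: mult.assoc flip: exp_add)
qed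

lemma gauss_lr_mult:
  assumes "\<sigma> \<noteq> 0"
  shows "gauss_lr \<sigma> a y * gauss_lr \<sigma> b y = exp (a * b / \<sigma>\<^sup>2) * gauss_lr \<sigma> (a + b) y"
proof -
  have "(a * y / \<sigma>\<^sup>2 - a\<^sup>2 / (2 * \<sigma>\<^sup>2)) + (b * y / \<sigma>\<^sup>2 - b\<^sup>2 / (2 * \<sigma>\<^sup>2))
      = a * b / \<sigma>\<^sup>2 + ((a + b) * y / \<sigma>\<^sup>2 - (a + b)\<^sup>2 / (2 * \<sigma>\<^sup>2))"
    using assms by (simp add: field_simps power2_eq_square)
  then show ?thesis
    unfolding gauss_lr_def by (simp flip: exp_add)
qed

lemma density_gauss_lr:
  assumes "0 < \<sigma>"
  shows "density (density lborel (normal_density 0 \<sigma>)) (\<lambda>y. ennreal (gauss_lr \<sigma> a y))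
       = density lborel (normal_density a \<sigma>)"
  using assms
  by (subst density_density_eq)
     (auto intro!: density_cong simp: normal_density_mult_gauss_lr normal_density_nonneg
        gauss_lr_pos less_imp_le simp flip: ennreal_mult)

lemma nn_integral_gauss_lr:
  assumes "0 < \<sigma>"
  shows "(\<integral>\<^sup>+ y. ennreal (gauss_lr \<sigma> a y) \<partial>density lborel (normal_density 0 \<sigma>)) = 1"
proof -
  interpret prob_space "density lborel (normal_density a \<sigma>)"
    using assms by (rule prob_space_normal_density)
  have "(\<integral>\<^sup>+ y. ennreal (gauss_lr \<sigma> a y) \<partial>density lborel (normal_density 0 \<sigma>))
      = (\<integral>\<^sup>+ y. ennreal (normal_density a \<sigma> y) \<partial>lborel)"
    using assms
    by (subst nn_integral_density)
       (auto intro!: nn_integral_cong simp: normal_density_mult_gauss_lr normal_density_nonneg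
          gauss_lr_pos less_imp_le simp flip: ennreal_mult)
  also have "\<dots> = 1"
    using emeasure_space_1 by (simp add: emeasure_density)
  finally show ?thesis .
qed

lemma nn_integral_gauss_lr_mult:
  assumes "0 < \<sigma>"
  shows "(\<integral>\<^sup>+ y. ennreal (gauss_lr \<sigma> a y * gauss_lr \<sigma> b y) \<partial>density lborel (normal_density 0 \<sigma>))
       = ennreal (exp (a * b / \<sigma>\<^sup>2))"
proof -
  have "(\<integral>\<^sup>+ y. ennreal (gauss_lr \<sigma> a y * gauss_lr \<sigma> b y) \<partial>density lborel (normal_density 0 \<sigma>))
      = (\<integral>\<^sup>+ y. ennreal (exp (a * b / \<sigma>\<^sup>2)) * ennreal (gauss_lr \<sigma> (a + b) y)
           \<partial>density lborel (normal_density 0 \<sigma>))"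
    using assms by (intro nn_integral_cong) (simp add: gauss_lr_mult gauss_lr_pos less_imp_le flip: ennreal_mult)
  also have "\<dots> = ennreal (exp (a * b / \<sigma>\<^sup>2))"
    using assms by (subst nn_integral_cmult) (auto simp: nn_integral_gauss_lr)
  finally show ?thesis .
qed

lemma product_prob_space_normal:
  "0 < \<sigma> \<Longrightarrow> product_prob_space (\<lambda>k. density lborel (normal_density (f k) \<sigma>))"
  by (simp add: product_prob_space_def product_sigma_finite_def prob_space_imp_sigma_finite
      product_prob_space_axioms_def prob_space_normal_density)

lemma prob_space_Pr_obs: "0 < n \<Longrightarrow> prob_space (Pr_obs f n)"
  unfolding Pr_obs_def by (rule prob_space_PiM) (simp add: prob_space_normal_density)

lemma sets_Pr_obs: "sets (Pr_obs f n) = obs_events"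
  unfolding Pr_obs_def obs_events_def by (intro sets_PiM_cong) auto

lemma space_Pr_obs: "space (Pr_obs f n) = UNIV"
  unfolding Pr_obs_def by (simp add: space_PiM)

definition obs_lr :: "nat \<Rightarrow> nat set \<Rightarrow> (nat \<Rightarrow> real) \<Rightarrow> (nat \<Rightarrow> real) \<Rightarrow> real" where
  "obs_lr n K g Y = (\<Prod>k\<in>K. gauss_lr (1 / sqrt n) (g k) (Y k))"

lemma obs_lr_pos: "0 < obs_lr n K g Y"
  unfolding obs_lr_def by (intro prod_pos) (simp add: gauss_lr_pos)

lemma obs_lr_measurable [measurable]:
  "finite K \<Longrightarrow> obs_lr n K g \<in> borel_measurable (Pr_obs f n)"
  unfolding obs_lr_def Pr_obs_def by measurable

lemma Pr_obs_override_eq_density: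
  assumes n: "0 < n" and K: "finite K" and f0: "\<And>k. k \<in> K \<Longrightarrow> f0 k = 0"
  shows "Pr_obs (override_on f0 g K) n = density (Pr_obs f0 n) (\<lambda>Y. ennreal (obs_lr n K g Y))"
proof -
  define \<sigma> where "\<sigma> = 1 / sqrt (real n)"
  have \<sigma>: "0 < \<sigma>" using n by (simp add: \<sigma>_def)
  interpret product_prob_space "\<lambda>k. density lborel (normal_density (f0 k) \<sigma>)" UNIV
    using \<sigma> by (rule product_prob_space_normal)
  have "Pr_obs (override_on f0 g K) n
      = PiM UNIV (\<lambda>k. if k \<in> K then density (density lborel (normal_density (f0 k) \<sigma>))
                                        (\<lambda>y. ennreal (gauss_lr \<sigma> (g k) y))
                       else density lborel (normal_density (f0 k) \<sigma>))"
    unfolding Pr_obs_def \<sigma>_def[symmetric]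
    using f0 \<sigma> by (intro PiM_cong) (auto simp: density_gauss_lr)
  also have "\<dots> = density (Pr_obs f0 n) (\<lambda>Y. \<Prod>k\<in>K. ennreal (gauss_lr \<sigma> (g k) (Y k)))"
    unfolding Pr_obs_def \<sigma>_def[symmetric]
    using K f0 \<sigma> by (intro PiM_density_eq_density_PiM) (auto simp: nn_integral_gauss_lr)
  finally show ?thesis
    by (simp add: obs_lr_def \<sigma>_def prod_ennreal gauss_lr_pos less_imp_le)
qed

lemma nn_integral_obs_lr_mult:
  assumes n: "0 < n" and K: "finite K" and f0: "\<And>k. k \<in> K \<Longrightarrow> f0 k = 0"
  shows "(\<integral>\<^sup>+ Y. ennreal (obs_lr n K g Y * obs_lr n K h Y) \<partial>Pr_obs f0 n)
       = ennreal (exp (n * (\<Sum>k\<in>K. g k * h k)))"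
proof -
  define \<sigma> where "\<sigma> = 1 / sqrt (real n)"
  have \<sigma>: "0 < \<sigma>" using n by (simp add: \<sigma>_def)
  interpret product_prob_space "\<lambda>k. density lborel (normal_density (f0 k) \<sigma>)" UNIV
    using \<sigma> by (rule product_prob_space_normal)
  have "(\<integral>\<^sup>+ Y. ennreal (obs_lr n K g Y * obs_lr n K h Y) \<partial>Pr_obs f0 n)
      = (\<integral>\<^sup>+ Y. (\<Prod>k\<in>K. ennreal (gauss_lr \<sigma> (g k) (Y k) * gauss_lr \<sigma> (h k) (Y k))) \<partial>Pr_obs f0 n)"
    unfolding obs_lr_def \<sigma>_def
    by (intro nn_integral_cong) (simp add: prod.distrib prod_ennreal gauss_lr_pos less_imp_le)
  also have "\<dots> = (\<Prod>k\<in>K. \<integral>\<^sup>+ y. ennreal (gauss_lr \<sigma> (g k) y * gauss_lr \<sigma> (h k) y)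
                           \<partial>density lborel (normal_density (f0 k) \<sigma>))"
    unfolding Pr_obs_def \<sigma>_def[symmetric] using K by (intro nn_integral_PiM_prod_finite) auto
  also have "\<dots> = (\<Prod>k\<in>K. ennreal (exp (n * (g k * h k))))"
    using \<sigma> n f0 by (intro prod.cong refl) (simp add: nn_integral_gauss_lr_mult \<sigma>_def power_divide)
  also have "\<dots> = ennreal (exp (n * (\<Sum>k\<in>K. g k * h k)))"
    using K by (simp add: prod_ennreal exp_sum sum_distrib_left)
  finally show ?thesis .
qed

section \<open>Chi-square bound for mixtures\<close>

lemma (in prob_space) nn_integral_density_minus_one_sq:
  fixes L :: "'a \<Rightarrow> real"
  assumes L_meas: "L \<in> borel_measurable M" and L_nonneg: "\<And>x. 0 \<le> L x"
    and int_L: "(\<integral>\<^sup>+ x. ennreal (L x) \<partial>M) = 1"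
    and int_L2: "(\<integral>\<^sup>+ x. ennreal ((L x)\<^sup>2) \<partial>M) = ennreal V"
  shows "1 \<le> V" and "(\<integral>\<^sup>+ x. ennreal ((L x - 1)\<^sup>2) \<partial>M) = ennreal (V - 1)"
proof -
  define X where "X = (\<integral>\<^sup>+ x. ennreal ((L x - 1)\<^sup>2) \<partial>M)"
  have "X + 2 = (\<integral>\<^sup>+ x. ennreal ((L x - 1)\<^sup>2) + 2 * ennreal (L x) \<partial>M)"
    unfolding X_def using L_meas by (simp add: nn_integral_add nn_integral_cmult int_L)
  also have "\<dots> = (\<integral>\<^sup>+ x. ennreal ((L x)\<^sup>2) + 1 \<partial>M)"
  proof (intro nn_integral_cong)
    fix x
    have "ennreal ((L x - 1)\<^sup>2) + 2 * ennreal (L x) = ennreal ((L x - 1)\<^sup>2 + 2 * L x)"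
      using L_nonneg[of x] by (simp add: ennreal_plus ennreal_mult)
    also have "(L x - 1)\<^sup>2 + 2 * L x = (L x)\<^sup>2 + 1"
      by (simp add: power2_eq_square algebra_simps)
    finally show "ennreal ((L x - 1)\<^sup>2) + 2 * ennreal (L x) = ennreal ((L x)\<^sup>2) + 1"
      by (simp add: ennreal_plus)
  qed
  also have "\<dots> = ennreal V + 1"
    using L_meas by (simp add: nn_integral_add int_L2 emeasure_space_1)
  finally have X2: "X + 2 = ennreal V + 1" .
  show V: "1 \<le> V"
  proof (rule ccontr)
    assume "\<not> 1 \<le> V"
    then have "ennreal V + 1 < 2"
      by (cases "0 \<le> V") (auto simp: ennreal_less_iff simp flip: ennreal_plus one_add_one)
    moreover have "2 \<le> X + 2" by simp
    ultimately show False using X2 by simp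
  qed
  have "ennreal V + 1 = ennreal (V - 1) + 2"
    using V ennreal_plus[of "V - 1" 1] by (simp add: add.assoc flip: one_add_one)
  with X2 have "2 + X = 2 + ennreal (V - 1)"
    by (simp add: add.commute)
  then show "(\<integral>\<^sup>+ x. ennreal ((L x - 1)\<^sup>2) \<partial>M) = ennreal (V - 1)"
    by (simp add: X_def ennreal_add_left_cancel)
qed

lemma (in prob_space) prob_le_nn_integral_density_plus_chi2:
  fixes L :: "'a \<Rightarrow> real"
  assumes L_meas: "L \<in> borel_measurable M" and L_nonneg: "\<And>x. 0 \<le> L x"
    and int_L: "(\<integral>\<^sup>+ x. ennreal (L x) \<partial>M) = 1"
    and int_L2: "(\<integral>\<^sup>+ x. ennreal ((L x)\<^sup>2) \<partial>M) = ennreal V"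
    and c: "0 < c" and A: "A \<in> events"
  shows "ennreal (prob A)
       \<le> (\<integral>\<^sup>+ x. ennreal (L x) * indicator A x \<partial>M) + ennreal ((V - 1) / (2 * c) + c / 2)"
proof -
  note V = nn_integral_density_minus_one_sq[OF L_meas L_nonneg int_L int_L2]
  \<comment> \<open>AM-GM: \<open>|L - 1| \<le> (L - 1)\<^sup>2 / (2 c) + c / 2\<close>\<close>
  have am_gm: "ennreal \<bar>L x - 1\<bar> \<le> ennreal ((L x - 1)\<^sup>2) * ennreal (1 / (2 * c)) + ennreal (c / 2)" for x
  proof -
    have "0 \<le> (\<bar>L x - 1\<bar> - c)\<^sup>2" by simp
    then have "\<bar>L x - 1\<bar> \<le> (L x - 1)\<^sup>2 * (1 / (2 * c)) + c / 2"
      using c by (simp add: power2_eq_square field_simps abs_mult_self_eq)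
    then show ?thesis
      using c by (simp flip: ennreal_mult ennreal_plus del: ennreal_plus)
  qed
  have dev: "(\<integral>\<^sup>+ x. ennreal \<bar>L x - 1\<bar> \<partial>M) \<le> ennreal ((V - 1) / (2 * c) + c / 2)"
  proof -
    have "(\<integral>\<^sup>+ x. ennreal \<bar>L x - 1\<bar> \<partial>M)
        \<le> (\<integral>\<^sup>+ x. ennreal ((L x - 1)\<^sup>2) * ennreal (1 / (2 * c)) + ennreal (c / 2) \<partial>M)"
      by (intro nn_integral_mono am_gm)
    also have "\<dots> = ennreal (V - 1) * ennreal (1 / (2 * c)) + ennreal (c / 2)"
      using L_meas by (simp add: nn_integral_add nn_integral_multc emeasure_space_1 V(2))
    also have "\<dots> = ennreal ((V - 1) / (2 * c) + c / 2)"
      using c V(1) by (simp flip: ennreal_mult ennreal_plus del: ennreal_plus)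
    finally show ?thesis .
  qed
  have "ennreal (prob A) = (\<integral>\<^sup>+ x. indicator A x \<partial>M)"
    using A by (simp add: emeasure_eq_measure)
  also have "\<dots> \<le> (\<integral>\<^sup>+ x. ennreal (L x) * indicator A x + ennreal \<bar>L x - 1\<bar> \<partial>M)"
  proof (intro nn_integral_mono)
    fix x
    have "ennreal 1 \<le> ennreal (L x + \<bar>L x - 1\<bar>)"
      by (intro ennreal_leI) linarith
    then show "indicator A x \<le> ennreal (L x) * indicator A x + ennreal \<bar>L x - 1\<bar>"
      using L_nonneg[of x] by (cases "x \<in> A") (simp_all add: ennreal_plus)
  qed
  also have "\<dots> = (\<integral>\<^sup>+ x. ennreal (L x) * indicator A x \<partial>M) + (\<integral>\<^sup>+ x. ennreal \<bar>L x - 1\<bar> \<partial>M)"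
    using A L_meas by (intro nn_integral_add) auto
  finally show ?thesis
    using dev by (meson add_left_mono order_trans)
qed

lemma nn_integral_average_density_indicator:
  fixes L :: "'t \<Rightarrow> 'a \<Rightarrow> real"
  assumes \<Theta>: "finite \<Theta>"
    and P: "\<And>\<theta>. \<theta> \<in> \<Theta> \<Longrightarrow> P \<theta> = density M (\<lambda>x. ennreal (L \<theta> x))"
    and prob: "\<And>\<theta>. \<theta> \<in> \<Theta> \<Longrightarrow> prob_space (P \<theta>)"
    and L_meas: "\<And>\<theta>. \<theta> \<in> \<Theta> \<Longrightarrow> L \<theta> \<in> borel_measurable M"
    and L_nonneg: "\<And>\<theta> x. 0 \<le> L \<theta> x"
    and B: "B \<in> sets M"
  shows "(\<integral>\<^sup>+ x. ennreal ((\<Sum>\<theta>\<in>\<Theta>. L \<theta> x) / card \<Theta>) * indicator B x \<partial>M)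
       = ennreal ((\<Sum>\<theta>\<in>\<Theta>. measure (P \<theta>) B) / card \<Theta>)"
proof -
  have "ennreal ((\<Sum>\<theta>\<in>\<Theta>. L \<theta> x) / card \<Theta>) * indicator B x
      = ennreal (1 / card \<Theta>) * (\<Sum>\<theta>\<in>\<Theta>. ennreal (L \<theta> x) * indicator B x)" for x
  proof -
    have "ennreal ((\<Sum>\<theta>\<in>\<Theta>. L \<theta> x) / card \<Theta>) = ennreal (1 / card \<Theta>) * ennreal (\<Sum>\<theta>\<in>\<Theta>. L \<theta> x)"
      by (simp flip: ennreal_mult')
    also have "ennreal (\<Sum>\<theta>\<in>\<Theta>. L \<theta> x) = (\<Sum>\<theta>\<in>\<Theta>. ennreal (L \<theta> x))"
      using L_nonneg by (simp add: sum_ennreal)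
    finally show ?thesis
      by (simp add: sum_distrib_right mult.assoc)
  qed
  then have "(\<integral>\<^sup>+ x. ennreal ((\<Sum>\<theta>\<in>\<Theta>. L \<theta> x) / card \<Theta>) * indicator B x \<partial>M)
      = ennreal (1 / card \<Theta>) * (\<Sum>\<theta>\<in>\<Theta>. \<integral>\<^sup>+ x. ennreal (L \<theta> x) * indicator B x \<partial>M)"
    using B L_meas by (simp add: nn_integral_cmult nn_integral_sum)
  also have "\<dots> = ennreal (1 / card \<Theta>) * (\<Sum>\<theta>\<in>\<Theta>. ennreal (measure (P \<theta>) B))"
  proof (intro arg_cong2[where f = "(*)"] sum.cong refl)
    fix \<theta> assume "\<theta> \<in> \<Theta>"
    then interpret prob_space "P \<theta>" by (rule prob)
    have "(\<integral>\<^sup>+ x. ennreal (L \<theta> x) * indicator B x \<partial>M) = emeasure (P \<theta>) B"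
      using B L_meas[OF \<open>\<theta> \<in> \<Theta>\<close>] by (simp add: P[OF \<open>\<theta> \<in> \<Theta>\<close>] emeasure_density)
    then show "(\<integral>\<^sup>+ x. ennreal (L \<theta> x) * indicator B x \<partial>M) = ennreal (measure (P \<theta>) B)"
      by (simp add: emeasure_eq_measure)
  qed
  also have "\<dots> = ennreal ((\<Sum>\<theta>\<in>\<Theta>. measure (P \<theta>) B) / card \<Theta>)"
    by (simp add: sum_ennreal flip: ennreal_mult')
  finally show ?thesis .
qed

lemma nn_integral_average_density:
  fixes L :: "'t \<Rightarrow> 'a \<Rightarrow> real"
  assumes \<Theta>: "finite \<Theta>" "\<Theta> \<noteq> {}"
    and P: "\<And>\<theta>. \<theta> \<in> \<Theta> \<Longrightarrow> P \<theta> = density M (\<lambda>x. ennreal (L \<theta> x))"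
    and prob: "\<And>\<theta>. \<theta> \<in> \<Theta> \<Longrightarrow> prob_space (P \<theta>)"
    and L_meas: "\<And>\<theta>. \<theta> \<in> \<Theta> \<Longrightarrow> L \<theta> \<in> borel_measurable M"
    and L_nonneg: "\<And>\<theta> x. 0 \<le> L \<theta> x"
  shows "(\<integral>\<^sup>+ x. ennreal ((\<Sum>\<theta>\<in>\<Theta>. L \<theta> x) / card \<Theta>) \<partial>M) = 1"
proof -
  have "(\<integral>\<^sup>+ x. ennreal ((\<Sum>\<theta>\<in>\<Theta>. L \<theta> x) / card \<Theta>) \<partial>M)
      = (\<integral>\<^sup>+ x. ennreal ((\<Sum>\<theta>\<in>\<Theta>. L \<theta> x) / card \<Theta>) * indicator (space M) x \<partial>M)"
    by (intro nn_integral_cong) simp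
  also have "\<dots> = ennreal ((\<Sum>\<theta>\<in>\<Theta>. measure (P \<theta>) (space M)) / card \<Theta>)"
    using \<Theta>(1) P prob L_meas L_nonneg sets.top by (rule nn_integral_average_density_indicator)
  also have "(\<Sum>\<theta>\<in>\<Theta>. measure (P \<theta>) (space M)) = card \<Theta>"
    using prob_space.prob_space[OF prob] P by simp
  finally show ?thesis
    using \<Theta> by simp
qed

lemma nn_integral_average_square:
  fixes L :: "'t \<Rightarrow> 'a \<Rightarrow> real"
  assumes \<Theta>: "finite \<Theta>"
    and L_meas: "\<And>\<theta>. \<theta> \<in> \<Theta> \<Longrightarrow> L \<theta> \<in> borel_measurable M"
    and L_nonneg: "\<And>\<theta> x. 0 \<le> L \<theta> x"
    and I: "\<And>\<theta> \<theta>'. \<theta> \<in> \<Theta> \<Longrightarrow> \<theta>' \<in> \<Theta> \<Longrightarrow> (\<integral>\<^sup>+ x. ennreal (L \<theta> x * L \<theta>' x) \<partial>M) = ennreal (I \<theta> \<theta>')"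
    and I_nonneg: "\<And>\<theta> \<theta>'. 0 \<le> I \<theta> \<theta>'"
  shows "(\<integral>\<^sup>+ x. ennreal (((\<Sum>\<theta>\<in>\<Theta>. L \<theta> x) / card \<Theta>)\<^sup>2) \<partial>M)
       = ennreal ((\<Sum>\<theta>\<in>\<Theta>. \<Sum>\<theta>'\<in>\<Theta>. I \<theta> \<theta>') / (card \<Theta>)\<^sup>2)"
proof -
  have "ennreal (((\<Sum>\<theta>\<in>\<Theta>. L \<theta> x) / card \<Theta>)\<^sup>2)
      = ennreal (1 / (card \<Theta>)\<^sup>2) * (\<Sum>\<theta>\<in>\<Theta>. \<Sum>\<theta>'\<in>\<Theta>. ennreal (L \<theta> x * L \<theta>' x))" for x
  proof -
    have "((\<Sum>\<theta>\<in>\<Theta>. L \<theta> x) / card \<Theta>)\<^sup>2 = 1 / (card \<Theta>)\<^sup>2 * (\<Sum>\<theta>\<in>\<Theta>. \<Sum>\<theta>'\<in>\<Theta>. L \<theta> x * L \<theta>' x)"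
      by (simp add: power_divide power2_eq_square sum_product)
    then show ?thesis
      using L_nonneg by (simp add: sum_ennreal sum_nonneg flip: ennreal_mult')
  qed
  then have "(\<integral>\<^sup>+ x. ennreal (((\<Sum>\<theta>\<in>\<Theta>. L \<theta> x) / card \<Theta>)\<^sup>2) \<partial>M)
      = ennreal (1 / (card \<Theta>)\<^sup>2) * (\<Sum>\<theta>\<in>\<Theta>. \<Sum>\<theta>'\<in>\<Theta>. \<integral>\<^sup>+ x. ennreal (L \<theta> x * L \<theta>' x) \<partial>M)"
    using L_meas by (simp add: nn_integral_cmult nn_integral_sum)
  also have "\<dots> = ennreal ((\<Sum>\<theta>\<in>\<Theta>. \<Sum>\<theta>'\<in>\<Theta>. I \<theta> \<theta>') / (card \<Theta>)\<^sup>2)"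
    using I I_nonneg by (simp add: sum_ennreal sum_nonneg flip: ennreal_mult')
  finally show ?thesis .
qed

lemma sum_sign_vectors_exp_inner:
  assumes K: "finite K"
  defines "\<Theta> \<equiv> PiE K (\<lambda>_. {-1::real, 1})"
  shows "(\<Sum>\<theta>\<in>\<Theta>. \<Sum>\<theta>'\<in>\<Theta>. exp (a * (\<Sum>k\<in>K. \<theta> k * \<theta>' k))) = (card \<Theta>)\<^sup>2 * cosh a ^ card K"
proof -
  have card_\<Theta>: "card \<Theta> = 2 ^ card K"
    using K by (simp add: \<Theta>_def card_PiE numeral_2_eq_2)
  have inner: "(\<Sum>\<theta>'\<in>\<Theta>. exp (a * (\<Sum>k\<in>K. \<theta> k * \<theta>' k))) = (2 * cosh a) ^ card K"
    if \<theta>: "\<theta> \<in> \<Theta>" for \<theta>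
  proof -
    have "(\<Sum>\<theta>'\<in>\<Theta>. exp (a * (\<Sum>k\<in>K. \<theta> k * \<theta>' k))) = (\<Sum>\<theta>'\<in>\<Theta>. \<Prod>k\<in>K. exp (a * \<theta> k * \<theta>' k))"
      using K by (simp add: sum_distrib_left exp_sum mult.assoc)
    also have "\<dots> = (\<Prod>k\<in>K. \<Sum>v\<in>{-1::real, 1}. exp (a * \<theta> k * v))"
      unfolding \<Theta>_def using K by (subst prod_sum_PiE) auto
    also have "\<dots> = (\<Prod>k\<in>K. 2 * cosh a)"
    proof (intro prod.cong refl)
      fix k assume "k \<in> K"
      then have "\<theta> k = -1 \<or> \<theta> k = 1" using \<theta> by (auto simp: \<Theta>_def PiE_iff)
      then show "(\<Sum>v\<in>{-1::real, 1}. exp (a * \<theta> k * v)) = 2 * cosh a"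
        by (auto simp: cosh_field_def)
    qed
    finally show ?thesis by simp
  qed
  have "(\<Sum>\<theta>\<in>\<Theta>. \<Sum>\<theta>'\<in>\<Theta>. exp (a * (\<Sum>k\<in>K. \<theta> k * \<theta>' k))) = card \<Theta> * (2 * cosh a) ^ card K"
    using inner by simp
  also have "\<dots> = (card \<Theta>)\<^sup>2 * cosh a ^ card K"
    by (simp add: card_\<Theta> power2_eq_square power_mult_distrib)
  finally show ?thesis .
qed

lemma cosh_le_one_plus_square:
  fixes a :: real
  assumes "0 \<le> a" "a \<le> 1"
  shows "cosh a \<le> 1 + a\<^sup>2"
proof -
  have "exp a \<le> 1 + a + a\<^sup>2"
    using assms by (rule exp_bound)
  moreover have "exp (- a) \<le> 1 - a + a\<^sup>2"
  proof -
    have "exp (- a) \<le> 1 / (1 + a)"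
      using assms exp_ge_add_one_self[of a] by (simp add: exp_minus field_simps)
    also have "\<dots> \<le> 1 - a + a\<^sup>2"
    proof -
      have "1 \<le> (1 + a) * (1 - a + a\<^sup>2)"
        using assms by (simp add: algebra_simps power2_eq_square)
      then show ?thesis
        using assms by (simp add: divide_le_eq mult.commute)
    qed
    finally show ?thesis .
  qed
  ultimately show ?thesis
    by (simp add: cosh_field_def)
qed

lemma cosh_power_minus_one_le:
  fixes a d :: real
  assumes a: "0 \<le> a" and d: "0 \<le> d" "d \<le> 1/2" and m: "real m * a\<^sup>2 \<le> d"
  shows "cosh a ^ m - 1 \<le> 2 * d"
proof (cases "m = 0")
  case False
  then have "a\<^sup>2 \<le> d"
    using m mult_right_mono[of 1 "real m" "a\<^sup>2"] by simp
  then have "a \<le> 1"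
    using d power2_le_imp_le[of a 1] by simp
  then have "cosh a ^ m \<le> (1 + a\<^sup>2) ^ m"
    using a by (intro power_mono cosh_le_one_plus_square) auto
  also have "\<dots> \<le> exp (a\<^sup>2) ^ m"
    by (intro power_mono) (auto simp: add_nonneg_nonneg)
  also have "\<dots> = exp (m * a\<^sup>2)"
    by (simp add: exp_of_nat_mult)
  also have "\<dots> \<le> exp d"
    using m by simp
  also have "\<dots> \<le> 1 + 2 * d"
    using d by (rule real_exp_bound_lemma)
  finally show ?thesis by simp
qed (use d in simp)

lemma nn_integral_sign_mixture_lr_sq:
  assumes n: "0 < n" and K: "finite K" and f0: "\<And>k. k \<in> K \<Longrightarrow> f0 k = 0"
  defines "\<Theta> \<equiv> PiE K (\<lambda>_. {-1::real, 1})"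
  shows "(\<integral>\<^sup>+ Y. ennreal (((\<Sum>\<theta>\<in>\<Theta>. obs_lr n K (\<lambda>k. \<gamma> * \<theta> k) Y) / card \<Theta>)\<^sup>2) \<partial>Pr_obs f0 n)
       = ennreal (cosh (n * \<gamma>\<^sup>2) ^ card K)"
proof -
  have fin_\<Theta>: "finite \<Theta>" and card_\<Theta>: "card \<Theta> \<noteq> 0"
    using K by (simp_all add: \<Theta>_def finite_PiE card_eq_0_iff PiE_eq_empty_iff)
  have "(\<integral>\<^sup>+ Y. ennreal (((\<Sum>\<theta>\<in>\<Theta>. obs_lr n K (\<lambda>k. \<gamma> * \<theta> k) Y) / card \<Theta>)\<^sup>2) \<partial>Pr_obs f0 n)
      = ennreal ((\<Sum>\<theta>\<in>\<Theta>. \<Sum>\<theta>'\<in>\<Theta>. exp ((n * \<gamma>\<^sup>2) * (\<Sum>k\<in>K. \<theta> k * \<theta>' k))) / (card \<Theta>)\<^sup>2)"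
    using fin_\<Theta> K
    by (intro nn_integral_average_square)
       (auto simp: nn_integral_obs_lr_mult n f0 obs_lr_pos less_imp_le power2_eq_square
          sum_distrib_left mult_ac)
  also have "\<dots> = ennreal (cosh (n * \<gamma>\<^sup>2) ^ card K)"
    using card_\<Theta> by (simp add: \<Theta>_def sum_sign_vectors_exp_inner K)
  finally show ?thesis .
qed

lemma Pr_obs_le_sign_mixture:
  assumes n: "0 < n" and K: "finite K" and f0: "\<And>k. k \<in> K \<Longrightarrow> f0 k = 0"
    and c: "0 < c" and A: "A \<in> obs_events"
  defines "\<Theta> \<equiv> PiE K (\<lambda>_. {-1::real, 1})"
  shows "measure (Pr_obs f0 n) A
       \<le> (\<Sum>\<theta>\<in>\<Theta>. measure (Pr_obs (override_on f0 (\<lambda>k. \<gamma> * \<theta> k) K) n) A) / card \<Theta>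
          + ((cosh (n * \<gamma>\<^sup>2) ^ card K - 1) / (2 * c) + c / 2)"
proof -
  interpret prob_space "Pr_obs f0 n"
    using n by (rule prob_space_Pr_obs)
  define P where "P \<theta> = Pr_obs (override_on f0 (\<lambda>k. \<gamma> * \<theta> k) K) n" for \<theta> :: "nat \<Rightarrow> real"
  define L where "L \<theta> = obs_lr n K (\<lambda>k. \<gamma> * \<theta> k)" for \<theta> :: "nat \<Rightarrow> real"
  define Lavg where "Lavg Y = (\<Sum>\<theta>\<in>\<Theta>. L \<theta> Y) / card \<Theta>" for Y
  have \<Theta>: "finite \<Theta>" "\<Theta> \<noteq> {}"
    using K by (simp_all add: \<Theta>_def finite_PiE PiE_eq_empty_iff)
  have L_meas: "L \<theta> \<in> borel_measurable (Pr_obs f0 n)" for \<theta>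
    using K by (simp add: L_def)
  have L_nonneg: "0 \<le> L \<theta> Y" for \<theta> Y
    by (simp add: L_def obs_lr_pos less_imp_le)
  have dens: "P \<theta> = density (Pr_obs f0 n) (\<lambda>Y. ennreal (L \<theta> Y))" for \<theta>
    unfolding P_def L_def using n K f0 by (rule Pr_obs_override_eq_density)
  have prob_P: "prob_space (P \<theta>)" for \<theta>
    unfolding P_def using n by (rule prob_space_Pr_obs)
  have Lavg_meas: "Lavg \<in> borel_measurable (Pr_obs f0 n)"
    unfolding Lavg_def using L_meas by (auto intro!: borel_measurable_divide borel_measurable_sum)
  have int1: "(\<integral>\<^sup>+ Y. ennreal (Lavg Y) \<partial>Pr_obs f0 n) = 1"
    unfolding Lavg_def using \<Theta> dens prob_P L_meas L_nonneg by (rule nn_integral_average_density)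
  have int2: "(\<integral>\<^sup>+ Y. ennreal ((Lavg Y)\<^sup>2) \<partial>Pr_obs f0 n) = ennreal (cosh (n * \<gamma>\<^sup>2) ^ card K)"
    unfolding Lavg_def L_def \<Theta>_def using n K f0 by (rule nn_integral_sign_mixture_lr_sq)
  have A_ev: "A \<in> events"
    using A by (simp add: sets_Pr_obs)
  have "ennreal (prob A)
      \<le> (\<integral>\<^sup>+ Y. ennreal (Lavg Y) * indicator A Y \<partial>Pr_obs f0 n)
         + ennreal ((cosh (n * \<gamma>\<^sup>2) ^ card K - 1) / (2 * c) + c / 2)"
    by (rule prob_le_nn_integral_density_plus_chi2[OF Lavg_meas _ int1 int2 c A_ev])
       (simp add: Lavg_def sum_nonneg L_nonneg)
  also have "(\<integral>\<^sup>+ Y. ennreal (Lavg Y) * indicator A Y \<partial>Pr_obs f0 n)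
      = ennreal ((\<Sum>\<theta>\<in>\<Theta>. measure (P \<theta>) A) / card \<Theta>)"
    unfolding Lavg_def using \<Theta>(1) dens prob_P L_meas L_nonneg A_ev
    by (rule nn_integral_average_density_indicator)
  finally show ?thesis
    using c cosh_real_ge_1[of "n * \<gamma>\<^sup>2"]
    by (simp add: P_def flip: ennreal_plus del: ennreal_plus add: sum_nonneg one_le_power ennreal_le_iff
        add_nonneg_nonneg divide_nonneg_nonneg)
qed

section \<open>Choice of the dyadic level\<close>

text \<open>The squared amplitude at level \<open>j\<close>: a sign perturbation of the \<open>2^j - 1\<close> coordinates
  \<open>k \<in> (2^j, 2^(j+1))\<close> adds at most \<open>1\<close> to the squared Sobolev-\<open>r\<close> norm.\<close>
definition level_amp :: "real \<Rightarrow> nat \<Rightarrow> real" where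
  "level_amp r j = 1 / (2 ^ j * (2 ^ (j + 1)) powr (2 * r))"

lemma level_amp_pos: "0 < level_amp r j"
  by (simp add: level_amp_def)

lemma exists_power_of_two_between:
  fixes x :: real
  assumes x: "1 < x"
  obtains j :: nat where "x \<le> 2 ^ j" "2 ^ j \<le> 2 * x" "1 \<le> j"
proof
  define j where "j = nat \<lceil>log 2 x\<rceil>"
  have lx: "0 < log 2 x"
    using x by simp
  have "real j = real_of_int \<lceil>log 2 x\<rceil>"
    unfolding j_def using lx by simp
  then have pj: "(2::real) ^ j = 2 powr real_of_int \<lceil>log 2 x\<rceil>"
    by (simp add: powr_realpow flip: \<open>real j = _\<close>)
  have "x = 2 powr (log 2 x)"
    using x by simp
  also have "\<dots> \<le> 2 ^ j"
    unfolding pj by (intro powr_mono) auto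
  finally show "x \<le> 2 ^ j" .
  have "(2::real) ^ j \<le> 2 powr (log 2 x + 1)"
    unfolding pj by (intro powr_mono) linarith+
  also have "\<dots> = 2 * x"
    using x by (simp add: powr_add)
  finally show "2 ^ j \<le> 2 * x" .
  show "1 \<le> j"
    unfolding j_def using lx by linarith
qed

lemma level_amp_bounds:
  fixes r x :: real and n :: nat
  assumes r: "0 < r" and x: "1 < x"
  obtains j where "x powr (- (2 * r)) / (2 * 4 powr (2 * r)) \<le> (2 ^ j - 1) * level_amp r j"
    and "(2 ^ j - 1) * (real n * level_amp r j)\<^sup>2 \<le> (real n)\<^sup>2 * x powr (- (1 + 4 * r))"
proof -
  obtain j where px: "x \<le> 2 ^ j" and p2x: "2 ^ j \<le> 2 * x" and j: "1 \<le> j"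
    using exists_power_of_two_between[OF x] .
  define p where "p = (2::real) ^ j"
  have p2: "2 \<le> p"
    unfolding p_def using j by (metis power_one_right power_increasing one_le_numeral)
  have amp: "level_amp r j = 1 / (p * (2 * p) powr (2 * r))"
    by (simp add: level_amp_def p_def)
  have q_pos: "0 < (2 * p) powr (2 * r)"
    using p2 by simp
  have "x powr (- (2 * r)) / (2 * 4 powr (2 * r)) = 1 / (2 * (4 * x) powr (2 * r))"
    using x by (simp add: powr_mult powr_minus divide_simps)
  also have "\<dots> \<le> 1 / (2 * (2 * p) powr (2 * r))"
    using x p2 p2x r q_pos by (intro divide_left_mono mult_left_mono powr_mono2) (auto simp: p_def)
  also have "\<dots> = p / 2 * level_amp r j"
    unfolding amp using p2 by (simp add: field_simps)
  also have "\<dots> \<le> (p - 1) * level_amp r j"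
    using p2 by (intro mult_right_mono) (auto simp: amp q_pos less_imp_le)
  finally have sep: "x powr (- (2 * r)) / (2 * 4 powr (2 * r)) \<le> (2 ^ j - 1) * level_amp r j"
    by (simp add: p_def)
  have "(p - 1) * (real n * level_amp r j)\<^sup>2 \<le> p * (real n * level_amp r j)\<^sup>2"
    by (intro mult_right_mono) auto
  also have "\<dots> = (real n)\<^sup>2 / (p * ((2 * p) powr (2 * r))\<^sup>2)"
    unfolding amp using p2 q_pos by (simp add: field_simps power2_eq_square)
  also have "((2 * p) powr (2 * r))\<^sup>2 = (2 * p) powr (4 * r)"
    using p2 by (simp add: power2_eq_square flip: powr_add)
  also have "(real n)\<^sup>2 / (p * (2 * p) powr (4 * r)) \<le> (real n)\<^sup>2 / (x * x powr (4 * r))"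
    using x px p2 r by (intro divide_left_mono mult_mono powr_mono2) (auto simp: p_def)
  also have "x * x powr (4 * r) = x powr (1 + 4 * r)"
    using x by (simp add: powr_add)
  finally have "(2 ^ j - 1) * (real n * level_amp r j)\<^sup>2 \<le> (real n)\<^sup>2 * x powr (- (1 + 4 * r))"
    unfolding powr_minus by (simp add: p_def divide_inverse)
  with sep show ?thesis
    by (rule that)
qed

lemma level_amp_bounds_powr:
  fixes r a :: real and n :: nat
  assumes r: "0 < r" and a: "0 < a" and n: "2 \<le> n"
  defines "C \<equiv> 1 / (2 * 4 powr (2 * r))"
  obtains j where "sqrt C * real n powr (- (a * r)) \<le> sqrt ((2 ^ j - 1) * level_amp r j)"
    and "(2 ^ j - 1) * (real n * level_amp r j)\<^sup>2 \<le> real n powr (2 - a * (1 + 4 * r))"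
proof -
  have n': "0 < real n"
    using n by simp
  have x: "1 < real n powr a"
    using n a by (intro gr_one_powr) auto
  obtain j where sep: "(real n powr a) powr (- (2 * r)) / (2 * 4 powr (2 * r)) \<le> (2 ^ j - 1) * level_amp r j"
    and chi: "(2 ^ j - 1) * (real n * level_amp r j)\<^sup>2 \<le> (real n)\<^sup>2 * (real n powr a) powr (- (1 + 4 * r))"
    by (rule level_amp_bounds[OF r x, where n = n])
  have "(real n powr (- (a * r)))\<^sup>2 = (real n powr a) powr (- (2 * r))"
    by (simp add: power2_eq_square powr_powr flip: powr_add) (simp add: mult.left_commute)
  then have "(sqrt C * real n powr (- (a * r)))\<^sup>2 \<le> (2 ^ j - 1) * level_amp r j"
    using sep by (simp add: C_def power_mult_distrib)
  then have sep': "sqrt C * real n powr (- (a * r)) \<le> sqrt ((2 ^ j - 1) * level_amp r j)"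
    by (rule real_le_rsqrt)
  have "(real n)\<^sup>2 * (real n powr a) powr (- (1 + 4 * r)) = real n powr (2 + a * (- (1 + 4 * r)))"
    using n' by (simp add: powr_powr powr_add powr_realpow)
  then have "(real n)\<^sup>2 * (real n powr a) powr (- (1 + 4 * r)) = real n powr (2 - a * (1 + 4 * r))"
    by (simp add: algebra_simps)
  then show ?thesis
    using sep' chi by (intro that) auto
qed

lemma eventually_level_separated:
  fixes r r' d :: real and rn :: "nat \<Rightarrow> real"
  assumes r: "0 < r" "r < r'" and d: "0 < d"
    and rn: "rn \<in> o(\<lambda>n. real n powr (- (r' / (2 * r' + 1/2))))"
  shows "eventually (\<lambda>n. \<exists>j. rn n < sqrt ((2 ^ j - 1) * level_amp r j)
           \<and> (2 ^ j - 1) * (real n * level_amp r j)\<^sup>2 \<le> d) sequentially"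
proof -
  define \<rho> where "\<rho> = r' / (2 * r' + 1/2)"
  define a where "a = \<rho> / r"
  define e where "e = a * (1 + 4 * r) - 2"
  define C where "C = 1 / (2 * 4 powr (2 * r))"
  have a: "0 < a" "a * r = \<rho>" and C: "0 < C"
    using r by (simp_all add: \<rho>_def a_def C_def)
  \<comment> \<open>\<open>e > 0\<close> is exactly the hypothesis \<open>r < r'\<close>\<close>
  have e: "0 < e"
  proof -
    have "a * (1 + 4 * r) = 2 * r' * (4 * r + 1) / (r * (4 * r' + 1))"
      using r by (simp add: a_def \<rho>_def field_simps)
    moreover have "r * (4 * r' + 1) < r' * (4 * r + 1)" and "0 < r * (4 * r' + 1)"
      using r by (simp_all add: algebra_simps add_pos_pos)
    ultimately show ?thesis
      by (simp add: e_def less_divide_eq)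
  qed
  have small_rn: "eventually (\<lambda>n. \<bar>rn n\<bar> \<le> sqrt C / 2 * real n powr (- \<rho>)) sequentially"
    using landau_o.smallD[OF rn, of "sqrt C / 2"] C by (simp add: \<rho>_def)
  have "((\<lambda>n. real n powr (- e)) \<longlongrightarrow> 0) sequentially"
    using e by (intro tendsto_neg_powr filterlim_real_sequentially) auto
  then have small_chi: "eventually (\<lambda>n. real n powr (- e) < d) sequentially"
    using d by (rule order_tendstoD(2))
  show ?thesis
    using small_rn small_chi eventually_ge_at_top[of 2]
  proof eventually_elim
    case (elim n)
    obtain j where sep: "sqrt C * real n powr (- \<rho>) \<le> sqrt ((2 ^ j - 1) * level_amp r j)"
      and chi: "(2 ^ j - 1) * (real n * level_amp r j)\<^sup>2 \<le> real n powr (- e)"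
      using level_amp_bounds_powr[OF r(1) a(1) elim(3)] by (auto simp: a(2) e_def C_def)
    have "0 < sqrt C * real n powr (- \<rho>)"
      using C elim(3) by simp
    then have "rn n < sqrt ((2 ^ j - 1) * level_amp r j)"
      using elim(1) sep by (simp add: field_simps)
    then show ?case
      using chi elim(2) by auto
  qed
qed

section \<open>The dyadic test function and sign perturbations\<close>

definition dyadic_fun :: "real \<Rightarrow> nat \<Rightarrow> real" where
  "dyadic_fun u k = (if k \<in> range (\<lambda>i. 2 ^ Suc i) then real k powr (- u) else 0)"

lemma dyadic_fun_0 [simp]: "dyadic_fun u 0 = 0"
  unfolding dyadic_fun_def by auto

lemma dyadic_fun_power: "dyadic_fun u (2 ^ Suc i) = 2 powr (- u * real (Suc i))"
proof -
  have "real (2 ^ Suc i) = 2 powr real (Suc i)"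
    by (metis of_nat_numeral of_nat_power powr_realpow zero_less_numeral)
  then have "real (2 ^ Suc i) powr (- u) = 2 powr (- u * real (Suc i))"
    by (simp add: powr_powr mult.commute)
  then show ?thesis
    unfolding dyadic_fun_def by auto
qed

lemma dyadic_fun_level_eq_0:
  assumes "k \<in> {2 ^ j<..<2 ^ (j + 1)}"
  shows "dyadic_fun u k = 0"
proof -
  have "k \<noteq> 2 ^ Suc i" for i
  proof
    assume "k = 2 ^ Suc i"
    then have "(2::nat) ^ j < 2 ^ Suc i" "(2::nat) ^ Suc i < 2 ^ (j + 1)"
      using assms by auto
    then have "j < Suc i" "Suc i < j + 1"
      by (simp_all only: power_strict_increasing_iff[of 2] one_less_numeral_iff semiring_norm(76))
    then show False by simp
  qed
  then show ?thesis
    unfolding dyadic_fun_def by auto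
qed

lemma summable_dyadic_fun_sob:
  assumes "t < u"
  shows "summable (\<lambda>k. (dyadic_fun u k)\<^sup>2 * real k powr (2 * t))"
proof -
  define q where "q = (2::real) powr (2 * t - 2 * u)"
  have q: "0 < q" "q < 1"
    using assms by (auto simp: q_def powr_less_one)
  have dyadic_term: "(dyadic_fun u (2 ^ Suc i))\<^sup>2 * real (2 ^ Suc i :: nat) powr (2 * t) = q * q ^ i" for i
  proof -
    have "real (2 ^ Suc i :: nat) = 2 powr real (Suc i)"
      by (metis of_nat_numeral of_nat_power powr_realpow zero_less_numeral)
    then have "real (2 ^ Suc i :: nat) powr (2 * t) = 2 powr (2 * t * real (Suc i))"
      by (simp add: powr_powr mult.commute)
    moreover have "(dyadic_fun u (2 ^ Suc i))\<^sup>2 = 2 powr (- 2 * u * real (Suc i))"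
      by (subst dyadic_fun_power) (simp add: power2_eq_square mult.assoc flip: powr_add)
    ultimately have "(dyadic_fun u (2 ^ Suc i))\<^sup>2 * real (2 ^ Suc i :: nat) powr (2 * t)
        = 2 powr ((2 * t - 2 * u) * real (Suc i))"
      by (simp add: algebra_simps flip: powr_add)
    also have "\<dots> = q powr real (Suc i)"
      by (simp add: q_def powr_powr)
    also have "\<dots> = q ^ Suc i"
      by (rule powr_realpow[OF q(1)])
    finally show ?thesis
      by simp
  qed
  have "summable (\<lambda>i. q * q ^ i)"
    using q by (intro summable_mult summable_geometric) auto
  then have "summable (\<lambda>i. (dyadic_fun u (2 ^ Suc i))\<^sup>2 * real (2 ^ Suc i :: nat) powr (2 * t))"
    by (simp only: dyadic_term)
  moreover have "strict_mono (\<lambda>i::nat. (2::nat) ^ Suc i)"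
    by (intro strict_monoI) simp
  ultimately show ?thesis
    by (subst summable_mono_reindex[symmetric]) (auto simp: dyadic_fun_def)
qed

lemma dyadic_fun_sob_pos:
  assumes "t < u"
  shows "0 < (\<Sum>k. (dyadic_fun u k)\<^sup>2 * real k powr (2 * t))"
proof -
  have "0 < (dyadic_fun u 2)\<^sup>2 * real 2 powr (2 * t)"
    using dyadic_fun_power[of u 0] by simp
  then show ?thesis
    using summable_dyadic_fun_sob[OF assms] by (intro suminf_pos2[of _ 2]) auto
qed

lemma block_energy_ge_dyadic:
  fixes J :: nat and g :: "nat \<Rightarrow> real"
  assumes J: "1 \<le> J" and \<epsilon>: "0 < \<epsilon>" "\<epsilon> < 1" and u: "0 < u"
    and dom: "\<And>k. (dyadic_fun u k)\<^sup>2 \<le> (g k)\<^sup>2"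
  shows "2 powr (- 2 * u * (real J * (1 - \<epsilon>) + 1))
       \<le> (\<Sum>k\<in>{nat \<lceil>2 powr (real J * (1 - \<epsilon>))\<rceil> .. 2 ^ J}. (g k)\<^sup>2)"
proof -
  define x where "x = real J * (1 - \<epsilon>)"
  define i where "i = nat \<lceil>x\<rceil>"
  have x: "0 < x" "x \<le> real J"
    using J \<epsilon> by (simp_all add: x_def mult_left_le)
  have i: "1 \<le> i" "i \<le> J" "x \<le> real i" "real i \<le> x + 1"
    unfolding i_def using x by (linarith, simp add: ceiling_le_iff nat_le_iff, linarith, linarith)
  have dyadic_i: "dyadic_fun u (2 ^ i) = 2 powr (- u * real i)"
    using dyadic_fun_power[of u "i - 1"] i(1) by simp
  have "2 powr (- 2 * u * (x + 1)) \<le> 2 powr (- 2 * u * real i)"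
    using u i(4) by (intro powr_mono) auto
  also have "\<dots> = (dyadic_fun u (2 ^ i))\<^sup>2"
    by (simp add: dyadic_i power2_eq_square mult.assoc flip: powr_add)
  also have "\<dots> \<le> (g (2 ^ i))\<^sup>2"
    by (rule dom)
  also have "\<dots> \<le> (\<Sum>k\<in>{nat \<lceil>2 powr x\<rceil> .. 2 ^ J}. (g k)\<^sup>2)"
  proof (rule member_le_sum)
    have "2 powr x \<le> 2 powr real i"
      using i(3) by (intro powr_mono) auto
    also have "2 powr real i = real (2 ^ i)"
      by (simp add: powr_realpow)
    finally have "\<lceil>2 powr x\<rceil> \<le> int (2 ^ i)"
      by (simp add: ceiling_le_iff)
    then have "nat \<lceil>2 powr x\<rceil> \<le> 2 ^ i"
      by (simp add: nat_le_iff)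
    moreover have "(2::nat) ^ i \<le> 2 ^ J"
      using i(2) by (intro power_increasing) auto
    ultimately show "2 ^ i \<in> {nat \<lceil>2 powr x\<rceil> .. 2 ^ J}"
      by simp
  qed auto
  finally show ?thesis
    by (simp add: x_def)
qed

lemma eventually_block_bound_dominates:
  fixes cN t u \<epsilon> :: real
  assumes cN: "0 < cN" and tu: "u * (1 - \<epsilon>) < t"
  shows "eventually (\<lambda>J. cN * 2 powr (- 2 * real J * t) \<le> 2 powr (- 2 * u * (real J * (1 - \<epsilon>) + 1)))
           sequentially"
  unfolding eventually_sequentially
proof (intro exI allI impI)
  define \<kappa> where "\<kappa> = t - u * (1 - \<epsilon>)"
  have \<kappa>: "0 < \<kappa>"
    using tu by (simp add: \<kappa>_def)
  fix J :: nat
  assume "nat \<lceil>(\<bar>log 2 cN\<bar> + \<bar>2 * u\<bar>) / (2 * \<kappa>)\<rceil> \<le> J"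
  then have "\<bar>log 2 cN\<bar> + \<bar>2 * u\<bar> \<le> real J * (2 * \<kappa>)"
    using \<kappa> by (simp add: divide_le_eq nat_le_iff ceiling_le_iff)
  then have "log 2 cN - 2 * real J * t \<le> - 2 * u * (real J * (1 - \<epsilon>) + 1)"
    by (simp add: \<kappa>_def algebra_simps)
  then have "2 powr (log 2 cN - 2 * real J * t) \<le> 2 powr (- 2 * u * (real J * (1 - \<epsilon>) + 1))"
    by (intro powr_mono) auto
  then show "cN * 2 powr (- 2 * real J * t) \<le> 2 powr (- 2 * u * (real J * (1 - \<epsilon>) + 1))"
    using cN by (simp add: powr_diff powr_minus divide_inverse)
qed

lemma summable_sq_of_summable_sob:
  fixes g :: "nat \<Rightarrow> real"
  assumes t: "0 \<le> t" and sm: "summable (\<lambda>k. (g k)\<^sup>2 * real k powr (2 * t))"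
  shows "summable (\<lambda>k. (g k)\<^sup>2)"
proof (rule summable_comparison_test[OF _ sm])
  have "(g k)\<^sup>2 \<le> (g k)\<^sup>2 * real k powr (2 * t)" if "1 \<le> k" for k
    using that t by (simp add: ge_one_powr_ge_zero mult_le_cancel_left1)
  then show "\<exists>N. \<forall>k\<ge>N. norm ((g k)\<^sup>2) \<le> (g k)\<^sup>2 * real k powr (2 * t)"
    by auto
qed

lemma S_set_memI_dominating:
  fixes g :: "nat \<Rightarrow> real"
  assumes g0: "g 0 = 0" and t: "0 \<le> t" and sm: "summable (\<lambda>k. (g k)\<^sup>2 * real k powr (2 * t))"
    and bB: "b \<le> sob_norm t g" "sob_norm t g \<le> B"
    and dom: "\<And>k. (dyadic_fun u k)\<^sup>2 \<le> (g k)\<^sup>2"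
    and \<epsilon>: "0 < \<epsilon>" "\<epsilon> < 1" and u: "0 < u" and J0: "1 \<le> J0"
    and tail: "\<And>J. J0 \<le> J \<Longrightarrow> c_const t * B\<^sup>2 * 2 powr (- 2 * real J * t)
                                \<le> 2 powr (- 2 * u * (real J * (1 - \<epsilon>) + 1))"
  shows "g \<in> S_set t \<epsilon> b B J0"
proof -
  have "c_const t * (sob_norm t g)\<^sup>2 * 2 powr (- 2 * real J * t)
      \<le> (\<Sum>k\<in>{nat \<lceil>2 powr (real J * (1 - \<epsilon>))\<rceil> .. 2 ^ J}. (g k)\<^sup>2)" if J: "J0 \<le> J" for J
  proof -
    have "(sob_norm t g)\<^sup>2 \<le> B\<^sup>2"
      using bB sm by (intro power_mono) (auto simp: sob_norm_def suminf_nonneg)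
    then have "c_const t * (sob_norm t g)\<^sup>2 * 2 powr (- 2 * real J * t)
        \<le> c_const t * B\<^sup>2 * 2 powr (- 2 * real J * t)"
      by (intro mult_right_mono mult_left_mono) (auto simp: c_const_def)
    also have "\<dots> \<le> 2 powr (- 2 * u * (real J * (1 - \<epsilon>) + 1))"
      using J by (rule tail)
    also have "\<dots> \<le> (\<Sum>k\<in>{nat \<lceil>2 powr (real J * (1 - \<epsilon>))\<rceil> .. 2 ^ J}. (g k)\<^sup>2)"
      using J J0 \<epsilon> u dom by (intro block_energy_ge_dyadic) auto
    finally show ?thesis .
  qed
  then show ?thesis
    unfolding S_set_def l2_seq_def using g0 summable_sq_of_summable_sob[OF t sm] sm bB by simp
qed

lemma sums_override_on_sq:
  fixes f h w :: "nat \<Rightarrow> real"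
  assumes K: "finite K" and f: "\<And>k. k \<in> K \<Longrightarrow> f k = 0" and sm: "summable (\<lambda>k. (f k)\<^sup>2 * w k)"
  shows "(\<lambda>k. (override_on f h K k)\<^sup>2 * w k) sums ((\<Sum>k. (f k)\<^sup>2 * w k) + (\<Sum>k\<in>K. (h k)\<^sup>2 * w k))"
proof -
  have "(override_on f h K k)\<^sup>2 * w k = (f k)\<^sup>2 * w k + (if k \<in> K then (h k)\<^sup>2 * w k else 0)" for k
    using f by (simp add: override_on_def)
  then show ?thesis
    using sums_add[OF summable_sums[OF sm] sums_If_finite_set[OF K]] by simp
qed

lemma l2_dist_override_on:
  assumes "finite K"
  shows "l2_dist f (override_on f h K) = sqrt (\<Sum>k\<in>K. (f k - h k)\<^sup>2)"
proof -
  have "(\<lambda>k. (f k - override_on f h K k)\<^sup>2) = (\<lambda>k. if k \<in> K then (f k - h k)\<^sup>2 else 0)"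
    by (auto simp: override_on_def)
  then show ?thesis
    using sums_If_finite_set[OF assms, of "\<lambda>k. (f k - h k)\<^sup>2"] by (simp add: l2_dist_def sums_iff)
qed

lemma level_amp_sob_le_1:
  assumes "0 \<le> r"
  shows "(\<Sum>k\<in>{(2::nat) ^ j<..<2 ^ (j + 1)}. level_amp r j * real k powr (2 * r)) \<le> 1"
proof -
  have "(\<Sum>k\<in>{(2::nat) ^ j<..<2 ^ (j + 1)}. level_amp r j * real k powr (2 * r))
      \<le> (\<Sum>k\<in>{(2::nat) ^ j<..<2 ^ (j + 1)}. level_amp r j * (2 ^ (j + 1)) powr (2 * r))"
  proof (intro sum_mono mult_left_mono powr_mono2)
    fix k :: nat assume "k \<in> {2 ^ j<..<2 ^ (j + 1)}"
    then have "k \<le> 2 ^ (j + 1)" by simp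
    then show "real k \<le> 2 ^ (j + 1)"
      by (metis of_nat_le_iff of_nat_numeral of_nat_power)
  qed (use assms level_amp_pos in \<open>auto intro: less_imp_le\<close>)
  also have "\<dots> = (2 ^ j - 1) * level_amp r j * (2 ^ (j + 1)) powr (2 * r)"
    by (simp add: of_nat_diff)
  also have "\<dots> \<le> 2 ^ j * level_amp r j * (2 ^ (j + 1)) powr (2 * r)"
    by (intro mult_right_mono) (auto simp: level_amp_pos less_imp_le)
  also have "\<dots> = 1"
    by (simp add: level_amp_def)
  finally show ?thesis .
qed

lemma sign_perturbation_mem_S_set:
  fixes \<theta> :: "nat \<Rightarrow> real"
  assumes r: "0 < r" "r < u" and \<epsilon>: "0 < \<epsilon>" "\<epsilon> < 1"
    and \<theta>: "\<theta> \<in> PiE {2 ^ j<..<2 ^ (j + 1)} (\<lambda>_. {-1, 1})"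
    and b: "b \<le> sqrt (\<Sum>k. (dyadic_fun u k)\<^sup>2 * real k powr (2 * r))"
    and B: "sqrt ((\<Sum>k. (dyadic_fun u k)\<^sup>2 * real k powr (2 * r)) + 1) \<le> B"
    and J0: "1 \<le> J0"
    and tail: "\<And>J. J0 \<le> J \<Longrightarrow> c_const r * B\<^sup>2 * 2 powr (- 2 * real J * r)
                                \<le> 2 powr (- 2 * u * (real J * (1 - \<epsilon>) + 1))"
  shows "override_on (dyadic_fun u) (\<lambda>k. sqrt (level_amp r j) * \<theta> k) {2 ^ j<..<2 ^ (j + 1)}
           \<in> S_set r \<epsilon> b B J0"
proof -
  define K where "K = {(2::nat) ^ j<..<2 ^ (j + 1)}"
  define g where "g = override_on (dyadic_fun u) (\<lambda>k. sqrt (level_amp r j) * \<theta> k) K"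
  define N where "N = (\<Sum>k. (dyadic_fun u k)\<^sup>2 * real k powr (2 * r))"
  define E where "E = (\<Sum>k\<in>K. (sqrt (level_amp r j) * \<theta> k)\<^sup>2 * real k powr (2 * r))"
  have f0_K: "\<And>k. k \<in> K \<Longrightarrow> dyadic_fun u k = 0"
    unfolding K_def by (rule dyadic_fun_level_eq_0)
  have sums: "(\<lambda>k. (g k)\<^sup>2 * real k powr (2 * r)) sums (N + E)"
    unfolding g_def N_def E_def
    using f0_K summable_dyadic_fun_sob[OF r(2)] by (intro sums_override_on_sq) (auto simp: K_def)
  have "(\<theta> k)\<^sup>2 = 1" if "k \<in> K" for k
  proof -
    have "\<theta> k = -1 \<or> \<theta> k = 1"
      using \<theta> that by (auto simp: K_def PiE_iff)
    then show ?thesis by auto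
  qed
  then have "E = (\<Sum>k\<in>K. level_amp r j * real k powr (2 * r))"
    unfolding E_def by (intro sum.cong refl) (simp add: power_mult_distrib level_amp_pos less_imp_le)
  then have E: "0 \<le> E" "E \<le> 1"
    using level_amp_sob_le_1[of r j] r by (auto simp: K_def level_amp_pos less_imp_le intro!: sum_nonneg)
  have sob: "sob_norm r g = sqrt (N + E)"
    using sums by (simp add: sob_norm_def sums_iff)
  have "g \<in> S_set r \<epsilon> b B J0"
  proof (rule S_set_memI_dominating[OF _ _ _ _ _ _ \<epsilon> _ J0 tail])
    show "g 0 = 0" by (simp add: g_def K_def)
    show "summable (\<lambda>k. (g k)\<^sup>2 * real k powr (2 * r))" using sums by (rule sums_summable)
    have "sqrt N \<le> sqrt (N + E)" "sqrt (N + E) \<le> sqrt (N + 1)"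
      using E by simp_all
    then show "b \<le> sob_norm r g" "sob_norm r g \<le> B"
      using b B unfolding sob N_def[symmetric] by linarith+
    show "(dyadic_fun u k)\<^sup>2 \<le> (g k)\<^sup>2" for k by (cases "k \<in> K") (auto simp: g_def f0_K)
  qed (use r in auto)
  then show ?thesis by (simp add: g_def K_def)
qed

lemma eventually_separated_sign_family:
  fixes r r' u d :: real and rn :: "nat \<Rightarrow> real"
  assumes r: "0 < r" "r < r'" "r < u" and \<epsilon>: "0 < \<epsilon>" "\<epsilon> < 1"
    and rn: "rn \<in> o(\<lambda>n. real n powr (- (r' / (2 * r' + 1/2))))" and d: "0 < d" "d \<le> 1"
    and b: "b \<le> sqrt (\<Sum>k. (dyadic_fun u k)\<^sup>2 * real k powr (2 * r))"
    and B: "sqrt ((\<Sum>k. (dyadic_fun u k)\<^sup>2 * real k powr (2 * r)) + 1) \<le> B"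
    and J0: "1 \<le> J0"
    and tail: "\<And>J. J0 \<le> J \<Longrightarrow> c_const r * B\<^sup>2 * 2 powr (- 2 * real J * r)
                                \<le> 2 powr (- 2 * u * (real J * (1 - \<epsilon>) + 1))"
  shows "eventually (\<lambda>n. \<exists>K \<gamma>. finite K \<and> (\<forall>k\<in>K. dyadic_fun u k = 0)
           \<and> cosh (real n * \<gamma>\<^sup>2) ^ card K - 1 \<le> d
           \<and> (\<forall>\<theta>\<in>PiE K (\<lambda>_. {-1, 1}).
                override_on (dyadic_fun u) (\<lambda>k. \<gamma> * \<theta> k) K \<in> S_set r \<epsilon> b B J0
                \<and> rn n < l2_dist (dyadic_fun u) (override_on (dyadic_fun u) (\<lambda>k. \<gamma> * \<theta> k) K)))
         sequentially"
  using eventually_level_separated[OF r(1,2) half_gt_zero[OF d(1)] rn]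
proof eventually_elim
  case (elim n)
  then obtain j where sep: "rn n < sqrt ((2 ^ j - 1) * level_amp r j)"
    and chi: "(2 ^ j - 1) * (real n * level_amp r j)\<^sup>2 \<le> d / 2"
    by blast
  define K where "K = {(2::nat) ^ j<..<2 ^ (j + 1)}"
  define \<gamma> where "\<gamma> = sqrt (level_amp r j)"
  have \<gamma>2: "\<gamma>\<^sup>2 = level_amp r j"
    by (simp add: \<gamma>_def level_amp_pos less_imp_le)
  have card_K: "real (card K) = 2 ^ j - 1"
    by (simp add: K_def of_nat_diff)
  have "cosh (real n * \<gamma>\<^sup>2) ^ card K - 1 \<le> 2 * (d / 2)"
    using chi d by (intro cosh_power_minus_one_le) (auto simp: \<gamma>2 card_K level_amp_pos less_imp_le)
  moreover have "rn n < l2_dist (dyadic_fun u) (override_on (dyadic_fun u) (\<lambda>k. \<gamma> * \<theta> k) K)"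
    if \<theta>: "\<theta> \<in> PiE K (\<lambda>_. {-1, 1})" for \<theta> :: "nat \<Rightarrow> real"
  proof -
    have "(dyadic_fun u k - \<gamma> * \<theta> k)\<^sup>2 = level_amp r j" if "k \<in> K" for k
    proof -
      have "\<theta> k = -1 \<or> \<theta> k = 1"
        using \<theta> that by (auto simp: PiE_iff)
      then show ?thesis
        using that by (auto simp: K_def dyadic_fun_level_eq_0 power_mult_distrib \<gamma>2)
    qed
    then show ?thesis
      using sep by (simp add: l2_dist_override_on K_def card_K)
  qed
  moreover have "override_on (dyadic_fun u) (\<lambda>k. \<gamma> * \<theta> k) K \<in> S_set r \<epsilon> b B J0"
    if "\<theta> \<in> PiE K (\<lambda>_. {-1, 1})" for \<theta> :: "nat \<Rightarrow> real"
    unfolding K_def \<gamma>_def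
    by (rule sign_perturbation_mem_S_set[OF r(1,3) \<epsilon> that[unfolded K_def] b B J0 tail])
  ultimately show ?case
    by (intro exI[of _ K] exI[of _ \<gamma>]) (auto simp: K_def dyadic_fun_level_eq_0)
qed

lemma exists_separated_sign_family:
  fixes \<epsilon> r r' s d :: real and rn :: "nat \<Rightarrow> real"
  assumes \<epsilon>: "0 < \<epsilon>" "\<epsilon> < 1" and r: "0 < r" "r < r'" "r < s" "s < r / (1 - \<epsilon>)"
    and rn: "rn \<in> o(\<lambda>n. real n powr (- (r' / (2 * r' + 1/2))))" and d: "0 < d" "d \<le> 1"
  obtains b B J0 f0 where "0 < b" "b < B" "1 \<le> J0" "f0 \<in> S_set s \<epsilon> b B J0"
    and "eventually (\<lambda>n. \<exists>K \<gamma>. finite K \<and> (\<forall>k\<in>K. f0 k = 0)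
           \<and> cosh (real n * \<gamma>\<^sup>2) ^ card K - 1 \<le> d
           \<and> (\<forall>\<theta>\<in>PiE K (\<lambda>_. {-1, 1}).
                override_on f0 (\<lambda>k. \<gamma> * \<theta> k) K \<in> S_set r \<epsilon> b B J0
                \<and> rn n < l2_dist f0 (override_on f0 (\<lambda>k. \<gamma> * \<theta> k) K)))
         sequentially"
proof -
  define u where "u = (s + r / (1 - \<epsilon>)) / 2"
  have "s < u" and "u < r / (1 - \<epsilon>)"
    using r(4) gt_half_sum[of s "r / (1 - \<epsilon>)"] by (simp_all add: u_def field_less_half_sum)
  then have u: "s < u" "u * (1 - \<epsilon>) < r"
    using \<epsilon> by (simp_all add: pos_less_divide_eq)
  define Nr where "Nr = (\<Sum>k. (dyadic_fun u k)\<^sup>2 * real k powr (2 * r))"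
  define Ns where "Ns = (\<Sum>k. (dyadic_fun u k)\<^sup>2 * real k powr (2 * s))"
  have N: "0 < Nr" "0 < Ns"
    unfolding Nr_def Ns_def using r u by (auto intro: dyadic_fun_sob_pos)
  define b where "b = min (sqrt Nr) (sqrt Ns)"
  define B where "B = sqrt (Nr + 1) + sqrt Ns + 1"
  have bB: "0 < b" "b < B" "b \<le> sqrt Nr" "b \<le> sqrt Ns" "sqrt (Nr + 1) \<le> B" "sqrt Ns \<le> B"
  proof -
    have "sqrt Nr \<le> sqrt (Nr + 1)" "0 \<le> sqrt Ns" "0 \<le> sqrt (Nr + 1)"
      using N by simp_all
    moreover have "0 < b" "b \<le> sqrt Nr" "b \<le> sqrt Ns"
      using N by (simp_all add: b_def)
    ultimately show "0 < b" "b < B" "b \<le> sqrt Nr" "b \<le> sqrt Ns" "sqrt (Nr + 1) \<le> B" "sqrt Ns \<le> B"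
      unfolding B_def by linarith+
  qed
  have "eventually (\<lambda>J. 1 \<le> J
      \<and> c_const r * B\<^sup>2 * 2 powr (- 2 * real J * r) \<le> 2 powr (- 2 * u * (real J * (1 - \<epsilon>) + 1))
      \<and> c_const s * B\<^sup>2 * 2 powr (- 2 * real J * s) \<le> 2 powr (- 2 * u * (real J * (1 - \<epsilon>) + 1)))
      sequentially"
    using eventually_ge_at_top[of 1] bB u r
    by (intro eventually_conj eventually_block_bound_dominates) (auto simp: c_const_def)
  then obtain J0 where J0: "1 \<le> J0"
    and tail: "\<And>J. J0 \<le> J \<Longrightarrow>
      c_const r * B\<^sup>2 * 2 powr (- 2 * real J * r) \<le> 2 powr (- 2 * u * (real J * (1 - \<epsilon>) + 1))
      \<and> c_const s * B\<^sup>2 * 2 powr (- 2 * real J * s) \<le> 2 powr (- 2 * u * (real J * (1 - \<epsilon>) + 1))"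
    unfolding eventually_sequentially by auto
  have "dyadic_fun u \<in> S_set s \<epsilon> b B J0"
  proof (rule S_set_memI_dominating[where u = u, OF _ _ _ _ _ _ \<epsilon> _ J0])
    have "sob_norm s (dyadic_fun u) = sqrt Ns"
      by (simp add: sob_norm_def Ns_def)
    then show "b \<le> sob_norm s (dyadic_fun u)" "sob_norm s (dyadic_fun u) \<le> B"
      using bB by simp_all
  qed (use r u tail summable_dyadic_fun_sob in auto)
  then show ?thesis
    by (rule that[OF bB(1,2) J0], intro eventually_separated_sign_family)
       (use r u \<epsilon> rn d bB J0 tail in \<open>auto simp: Nr_def\<close>)
qed

section \<open>Confidence sets\<close>

lemma eventually_measure_gt_of_liminf_INF:
  fixes E :: "nat \<Rightarrow> (nat \<Rightarrow> real) \<Rightarrow> (nat \<Rightarrow> real) set"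
  assumes lim: "ennreal a \<le> liminf (\<lambda>n. INF f\<in>S. emeasure (Pr_obs f n) (E n f))"
    and x: "0 \<le> x" "x < a"
  shows "eventually (\<lambda>n. \<forall>f\<in>S. x < measure (Pr_obs f n) (E n f)) sequentially"
proof -
  have "ennreal x < ennreal a"
    using x by (simp add: ennreal_less_iff)
  with lim have "eventually (\<lambda>n. ennreal x < (INF f\<in>S. emeasure (Pr_obs f n) (E n f))) sequentially"
    unfolding le_Liminf_iff by blast
  then show ?thesis
    using eventually_gt_at_top[of 0]
  proof eventually_elim
    case (elim n)
    show ?case
    proof
      fix f assume "f \<in> S"
      interpret prob_space "Pr_obs f n"
        using elim(2) by (rule prob_space_Pr_obs)
      have "ennreal x < emeasure (Pr_obs f n) (E n f)"
        using elim(1) INF_lower[OF \<open>f \<in> S\<close>] by (rule less_le_trans)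
      then show "x < measure (Pr_obs f n) (E n f)"
        using x by (simp add: emeasure_eq_measure ennreal_less_iff)
    qed
  qed
qed

lemma eventually_measure_lt_of_SUP_tendsto:
  fixes E :: "nat \<Rightarrow> (nat \<Rightarrow> real) \<Rightarrow> (nat \<Rightarrow> real) set"
  assumes lim: "((\<lambda>n. SUP f\<in>S. emeasure (Pr_obs f n) (E n f)) \<longlongrightarrow> 0) sequentially"
    and x: "0 < x"
  shows "eventually (\<lambda>n. \<forall>f\<in>S. measure (Pr_obs f n) (E n f) < x) sequentially"
proof -
  have "0 < ennreal x"
    using x by simp
  with lim have "eventually (\<lambda>n. (SUP f\<in>S. emeasure (Pr_obs f n) (E n f)) < ennreal x) sequentially"
    by (rule order_tendstoD(2))
  then show ?thesis
    using eventually_gt_at_top[of 0]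
  proof eventually_elim
    case (elim n)
    show ?case
    proof
      fix f assume "f \<in> S"
      interpret prob_space "Pr_obs f n"
        using elim(2) by (rule prob_space_Pr_obs)
      have "emeasure (Pr_obs f n) (E n f) < ennreal x"
        using SUP_upper[OF \<open>f \<in> S\<close>] elim(1) by (rule le_less_trans)
      then show "measure (Pr_obs f n) (E n f) < x"
        using x by (simp add: emeasure_eq_measure ennreal_less_iff)
    qed
  qed
qed

lemma measure_small_set_covering_far_point_le:
  fixes C :: "(nat \<Rightarrow> real) \<Rightarrow> (nat \<Rightarrow> real) set"
  assumes n: "0 < n"
    and ev_f0: "{Y. f0 \<in> C Y} \<in> obs_events" and ev_g: "{Y. g \<in> C Y} \<in> obs_events"
    and ev_big: "{Y. ereal \<rho> < l2_diam (C Y)} \<in> obs_events"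
    and sep: "\<rho> < l2_dist f0 g"
  shows "measure (Pr_obs g n) ({Y. f0 \<in> C Y} - {Y. ereal \<rho> < l2_diam (C Y)})
       \<le> 1 - measure (Pr_obs g n) {Y. g \<in> C Y}"
proof -
  interpret prob_space "Pr_obs g n"
    using n by (rule prob_space_Pr_obs)
  have "{Y. f0 \<in> C Y} - {Y. ereal \<rho> < l2_diam (C Y)} \<subseteq> space (Pr_obs g n) - {Y. g \<in> C Y}"
  proof
    fix Y assume Y: "Y \<in> {Y. f0 \<in> C Y} - {Y. ereal \<rho> < l2_diam (C Y)}"
    have "g \<notin> C Y"
    proof
      assume gC: "g \<in> C Y"
      have f0C: "f0 \<in> C Y"
        using Y by simp
      have "ereal \<rho> < ereal (l2_dist f0 g)"
        using sep by simp
      also have "\<dots> \<le> l2_diam (C Y)"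
        unfolding l2_diam_def by (intro SUP_upper2[OF f0C] SUP_upper2[OF gC]) auto
      finally show False
        using Y by simp
    qed
    then show "Y \<in> space (Pr_obs g n) - {Y. g \<in> C Y}"
      by (simp add: space_Pr_obs)
  qed
  then show ?thesis
    using ev_f0 ev_g ev_big
    by (subst prob_compl[symmetric])
       (auto intro!: finite_measure_mono simp: sets_Pr_obs obs_events_def)
qed

text \<open>On the event "\<open>f0 \<in> C\<close> and \<open>C\<close> has diameter at most \<open>\<rho>\<close>" no \<open>g \<theta>\<close> lies in \<open>C\<close>, so the
  event has probability \<open>> p - q\<close> under \<open>f0\<close> but \<open>\<le> 1 - p\<close> under every \<open>g \<theta>\<close>; \<open>mix\<close> caps the gap.\<close>
lemma coverage_diameter_mixture_bound:
  fixes C :: "(nat \<Rightarrow> real) \<Rightarrow> (nat \<Rightarrow> real) set" and g :: "'t \<Rightarrow> nat \<Rightarrow> real"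
  assumes n: "0 < n" and \<Theta>: "finite \<Theta>" "\<Theta> \<noteq> {}"
    and ev_f0: "{Y. f0 \<in> C Y} \<in> obs_events"
    and ev_g: "\<And>\<theta>. \<theta> \<in> \<Theta> \<Longrightarrow> {Y. g \<theta> \<in> C Y} \<in> obs_events"
    and ev_big: "{Y. ereal \<rho> < l2_diam (C Y)} \<in> obs_events"
    and cover_f0: "p < measure (Pr_obs f0 n) {Y. f0 \<in> C Y}"
    and cover_g: "\<And>\<theta>. \<theta> \<in> \<Theta> \<Longrightarrow> p < measure (Pr_obs (g \<theta>) n) {Y. g \<theta> \<in> C Y}"
    and small: "measure (Pr_obs f0 n) {Y. ereal \<rho> < l2_diam (C Y)} < q"
    and sep: "\<And>\<theta>. \<theta> \<in> \<Theta> \<Longrightarrow> \<rho> < l2_dist f0 (g \<theta>)"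
    and mix: "\<And>A. A \<in> obs_events \<Longrightarrow>
      measure (Pr_obs f0 n) A \<le> (\<Sum>\<theta>\<in>\<Theta>. measure (Pr_obs (g \<theta>) n) A) / card \<Theta> + \<eta>"
  shows "2 * p < 1 + q + \<eta>"
proof -
  define A where "A = {Y. f0 \<in> C Y} - {Y. ereal \<rho> < l2_diam (C Y)}"
  have A: "A \<in> obs_events"
    unfolding A_def using ev_f0 ev_big unfolding obs_events_def by (rule sets.Diff)
  interpret P0: prob_space "Pr_obs f0 n"
    using n by (rule prob_space_Pr_obs)
  have "measure (Pr_obs f0 n) A = measure (Pr_obs f0 n) {Y. f0 \<in> C Y}
      - measure (Pr_obs f0 n) ({Y. f0 \<in> C Y} \<inter> {Y. ereal \<rho> < l2_diam (C Y)})"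
    unfolding A_def using ev_f0 ev_big by (intro P0.finite_measure_Diff') (auto simp: sets_Pr_obs)
  moreover have "measure (Pr_obs f0 n) ({Y. f0 \<in> C Y} \<inter> {Y. ereal \<rho> < l2_diam (C Y)})
      \<le> measure (Pr_obs f0 n) {Y. ereal \<rho> < l2_diam (C Y)}"
    using ev_big by (intro P0.finite_measure_mono) (auto simp: sets_Pr_obs)
  ultimately have lower: "p - q < measure (Pr_obs f0 n) A"
    using cover_f0 small by linarith
  have "measure (Pr_obs (g \<theta>) n) A \<le> 1 - p" if "\<theta> \<in> \<Theta>" for \<theta>
    using measure_small_set_covering_far_point_le[OF n ev_f0 ev_g[OF that] ev_big sep[OF that]]
      cover_g[OF that] unfolding A_def by linarith
  then have "(\<Sum>\<theta>\<in>\<Theta>. measure (Pr_obs (g \<theta>) n) A) / card \<Theta> \<le> 1 - p"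
    using sum_mono[of \<Theta> "\<lambda>\<theta>. measure (Pr_obs (g \<theta>) n) A" "\<lambda>_. 1 - p"] \<Theta>
    by (simp add: divide_le_eq card_gt_0_iff mult.commute)
  with lower mix[OF A] show ?thesis
    by linarith
qed

lemma S_set_l2_seq: "f \<in> S_set t \<epsilon> b B J0 \<Longrightarrow> f \<in> l2_seq"
  by (simp add: S_set_def)

lemma sign_family_coverage_bound:
  fixes C :: "(nat \<Rightarrow> real) \<Rightarrow> (nat \<Rightarrow> real) set"
  assumes n: "0 < n" and K: "finite K" "\<forall>k\<in>K. f0 k = 0" and c: "0 < c"
    and chi: "cosh (real n * \<gamma>\<^sup>2) ^ card K - 1 \<le> c\<^sup>2 / 2"
    and ev_cover: "\<forall>f\<in>l2_seq. {Y. f \<in> C Y} \<in> obs_events"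
    and ev_big: "{Y. ereal \<rho> < l2_diam (C Y)} \<in> obs_events"
    and F: "F \<subseteq> l2_seq" "f0 \<in> F"
    and alt: "\<forall>\<theta>\<in>PiE K (\<lambda>_. {-1, 1}). override_on f0 (\<lambda>k. \<gamma> * \<theta> k) K \<in> F
                \<and> \<rho> < l2_dist f0 (override_on f0 (\<lambda>k. \<gamma> * \<theta> k) K)"
    and cover: "\<forall>f\<in>F. p < measure (Pr_obs f n) {Y. f \<in> C Y}"
    and small: "measure (Pr_obs f0 n) {Y. ereal \<rho> < l2_diam (C Y)} < q"
  shows "2 * p < 1 + q + 3 / 4 * c"
proof -
  have "2 * p < 1 + q + ((cosh (real n * \<gamma>\<^sup>2) ^ card K - 1) / (2 * c) + c / 2)"
  proof (rule coverage_diameter_mixture_bound[where g = "\<lambda>\<theta>. override_on f0 (\<lambda>k. \<gamma> * \<theta> k) K", OF n])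
    show "finite (PiE K (\<lambda>_. {-1::real, 1}))" "PiE K (\<lambda>_. {-1::real, 1}) \<noteq> {}"
      using K by (simp_all add: finite_PiE PiE_eq_empty_iff)
  qed (use ev_cover ev_big F alt cover small K c n in \<open>auto intro: Pr_obs_le_sign_mixture\<close>)
  moreover have "(cosh (real n * \<gamma>\<^sup>2) ^ card K - 1) / (2 * c) \<le> c / 4"
    using chi c by (simp add: divide_le_eq power2_eq_square)
  ultimately show ?thesis
    by linarith
qed

theorem theorem3:
  fixes \<alpha> \<epsilon> r r' s :: real and rn :: "nat \<Rightarrow> real"
  assumes "0 < \<alpha>" "\<alpha> < 1/2"
    and "0 < \<epsilon>" "\<epsilon> < 1"
    and "0 < r" "r < r'" "r' < r / (1 - \<epsilon>)"
    and "r' < s" "s < r / (1 - \<epsilon>)"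
    and "rn \<in> o(\<lambda>n. real n powr (- (r' / (2 * r' + 1/2))))"
  shows "\<not> (\<exists>C :: nat \<Rightarrow> (nat \<Rightarrow> real) \<Rightarrow> (nat \<Rightarrow> real) set.
            (\<forall>n Y. C n Y \<subseteq> l2_seq) \<and>
            (\<forall>n. \<forall>f\<in>l2_seq. {Y. f \<in> C n Y} \<in> obs_events) \<and>
            (\<forall>n. {Y. ereal (rn n) < l2_diam (C n Y)} \<in> obs_events) \<and>
            (\<forall>b B. \<forall>J0::nat. 0 < b \<longrightarrow> b < B \<longrightarrow> 1 \<le> J0 \<longrightarrow>
               liminf (\<lambda>n. INF f\<in>S_set r \<epsilon> b B J0 \<union> S_set s \<epsilon> b B J0.
                          emeasure (Pr_obs f n) {Y. f \<in> C n Y}) \<ge> ennreal (1 - \<alpha>) \<and>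
               ((\<lambda>n. SUP f\<in>S_set s \<epsilon> b B J0.
                          emeasure (Pr_obs f n) {Y. ereal (rn n) < l2_diam (C n Y)})
                  \<longlongrightarrow> 0) sequentially))"
proof (intro notI, elim exE conjE, goal_cases)
  case (1 C)
  note ev_cover = 1(2) and ev_big = 1(3) and honest = 1(4)
  define \<delta> where "\<delta> = (1 - 2 * \<alpha>) / 4"
  have \<delta>: "0 < \<delta>" "\<delta> < 1 - \<alpha>"
    using assms(1,2) by (simp_all add: \<delta>_def)
  have d: "0 < \<delta>\<^sup>2 / 2" "\<delta>\<^sup>2 / 2 \<le> 1"
    using assms(1,2) power_le_one[of \<delta> 2] by (simp_all add: \<delta>_def)
  have "r < s"
    using assms(6,8) by simp
  show False
  proof (rule exists_separated_sign_family[OF assms(3-6) \<open>r < s\<close> assms(9,10) d], goal_cases)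
    case (1 b B J0 f0)
    note f0 = 1(4) and family = 1(5)
    from honest 1(1-3)
    have "eventually (\<lambda>n. \<forall>f\<in>S_set r \<epsilon> b B J0 \<union> S_set s \<epsilon> b B J0.
                 1 - \<alpha> - \<delta> < measure (Pr_obs f n) {Y. f \<in> C n Y}) sequentially"
      and "eventually (\<lambda>n. \<forall>f\<in>S_set s \<epsilon> b B J0.
                 measure (Pr_obs f n) {Y. ereal (rn n) < l2_diam (C n Y)} < \<delta>) sequentially"
      using \<delta> by (auto intro!: eventually_measure_gt_of_liminf_INF eventually_measure_lt_of_SUP_tendsto)
    then have "eventually (\<lambda>n. False) sequentially"
      using family eventually_gt_at_top[of 0]
    proof eventually_elim
      case (elim n)
      have "2 * (1 - \<alpha> - \<delta>) < 1 + \<delta> + 3 / 4 * \<delta>"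
        using elim f0 ev_cover ev_big \<delta>(1)
        by - (elim exE conjE, rule sign_family_coverage_bound[where F = "S_set r \<epsilon> b B J0 \<union> S_set s \<epsilon> b B J0"],
              auto intro: S_set_l2_seq)
      then show False
        using \<delta>(1) by (simp add: \<delta>_def field_simps)
    qed
    then show False
      by simp
  qed
qed

end
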